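(* Let $q\ge2$, let $U$ be dual-unitary on $\mathbb{C}^q\otimes\mathbb{C}^q$, and let $\lambda_1,\dots,\lambda_{q^2-1}$ be the nontrivial eigenvalues of $\mathcal{M}_+^U$ (respectively of $\mathcal{M}_-^U$), ordered so that $|\lambda_1|\ge|\lambda_2|\ge\dots\ge|\lambda_{q^2-1}|$. Then $$\sum_{i=1}^{q^2-1}|\lambda_i|^2\le (q^2-1)(1-e_p(U)),\qquad |\lambda_k|\le \sqrt{1-e_p(U)}\,\frac{\sqrt{q^2-1}}{\sqrt k}\quad(1\le k\le q^2-1),$$ in particular $|\lambda_{q^2-1}|\le\sqrt{1-e_p(U)}$ and $|\lambda_1|\le\sqrt{1-e_p(U)}\sqrt{q^2-1}$. Consequently, for $1\le k\le q^2-1$, if $e_p(U)>1-\frac{k}{q^2-1}$ then $|\lambda_j|<1$ for all $j\ge k$; and if $e_p(U)>\frac{q^2-2}{q^2-1}$, then all nontrivial eigenvalues of both $\mathcal{M}_+^{U'}$ and $\mathcal{M}_-^{U'}$ have modulus strictly less than $1$ for every $U'=(u_1\otimes u_2)U(v_1\otimes v_2)$ with $u_1,u_2,v_1,v_2\in U(q)$ (the circuit is mixing whatever the single-site unitaries).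
   Context: Product basis $|i\alpha\rangle$ of $\mathbb{C}^q\otimes\mathbb{C}^q$; realignment $\langle\beta\alpha|X^{R_1}|ji\rangle=\langle i\alpha|X|j\beta\rangle$; $U$ is dual-unitary if $U$ and $U^{R_1}$ are unitary. $S$ is the swap operator. $E(U)=1-q^{-4}\operatorname{tr}[(U^{R_1}U^{R_1\dagger})^2]$, $E(S)=1-1/q^2$, and $e_p(U)=\frac{E(U)+E(US)-E(S)}{E(S)}$. For unitary $U$, $\mathcal{M}_+^U(a)=\frac1q\operatorname{tr}_1[U^\dagger(a\otimes I)U]$ and $\mathcal{M}_-^U(a)=\frac1q\operatorname{tr}_2[U^\dagger(I\otimes a)U]$ on $q\times q$ matrices; each fixes $I$ and preserves the space of traceless matrices, and its nontrivial eigenvalues are the $q^2-1$ eigenvalues (with algebraic multiplicity) of its restriction to traceless matrices. *)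

theory Defs
  imports "Jordan_Normal_Form.Matrix" "Jordan_Normal_Form.Char_Poly"
begin

text \<open>Operators on C^q (x) C^q are complex (q*q) x (q*q) matrices; the product
  basis vector |i alpha> has index i*q + alpha (first factor i, second alpha).\<close>

definition adj :: "complex mat \<Rightarrow> complex mat" where
  "adj A = mat (dim_col A) (dim_row A) (\<lambda>(i,j). cnj (A $$ (j,i)))"

definition unitary_mat :: "nat \<Rightarrow> complex mat \<Rightarrow> bool" where
  "unitary_mat n A \<longleftrightarrow> A \<in> carrier_mat n n \<and> A * adj A = 1\<^sub>m n \<and> adj A * A = 1\<^sub>m n"

text \<open>Realignment: <beta alpha| X^R |j i> = <i alpha| X |j beta>.\<close>
definition realign :: "nat \<Rightarrow> complex mat \<Rightarrow> complex mat" where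
  "realign q X = mat (q*q) (q*q)
     (\<lambda>(r,c). X $$ ((c mod q)*q + r mod q, (c div q)*q + r div q))"

definition dual_unitary :: "nat \<Rightarrow> complex mat \<Rightarrow> bool" where
  "dual_unitary q U \<longleftrightarrow> unitary_mat (q*q) U \<and> unitary_mat (q*q) (realign q U)"

text \<open>Swap operator S |i alpha> = |alpha i>.\<close>
definition swap_op :: "nat \<Rightarrow> complex mat" where
  "swap_op q = mat (q*q) (q*q) (\<lambda>(r,c). if r = (c mod q)*q + c div q then 1 else 0)"

definition tens :: "nat \<Rightarrow> complex mat \<Rightarrow> complex mat \<Rightarrow> complex mat" where
  "tens q A B = mat (q*q) (q*q)
     (\<lambda>(r,c). A $$ (r div q, c div q) * B $$ (r mod q, c mod q))"

definition ptrace1 :: "nat \<Rightarrow> complex mat \<Rightarrow> complex mat" where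
  "ptrace1 q X = mat q q (\<lambda>(a,b). \<Sum>i<q. X $$ (i*q + a, i*q + b))"

definition ptrace2 :: "nat \<Rightarrow> complex mat \<Rightarrow> complex mat" where
  "ptrace2 q X = mat q q (\<lambda>(i,j). \<Sum>a<q. X $$ (i*q + a, j*q + a))"

definition mtrace :: "complex mat \<Rightarrow> complex" where
  "mtrace A = (\<Sum>i<dim_row A. A $$ (i,i))"

text \<open>Entangling power E(U) = 1 - q^{-4} tr[(U^R U^R\<dagger>)^2] (the trace is real).\<close>
definition Ent :: "nat \<Rightarrow> complex mat \<Rightarrow> real" where
  "Ent q U = 1 - Re (mtrace ((realign q U * adj (realign q U)) * (realign q U * adj (realign q U))))
               / (real q ^ 4)"

definition ep :: "nat \<Rightarrow> complex mat \<Rightarrow> real" where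
  "ep q U = (Ent q U + Ent q (U * swap_op q) - Ent q (swap_op q)) / Ent q (swap_op q)"

definition Mplus :: "nat \<Rightarrow> complex mat \<Rightarrow> complex mat \<Rightarrow> complex mat" where
  "Mplus q U a = (1 / of_nat q) \<cdot>\<^sub>m ptrace1 q (adj U * tens q a (1\<^sub>m q) * U)"

definition Mminus :: "nat \<Rightarrow> complex mat \<Rightarrow> complex mat \<Rightarrow> complex mat" where
  "Mminus q U a = (1 / of_nat q) \<cdot>\<^sub>m ptrace2 q (adj U * tens q (1\<^sub>m q) a * U)"

definition unit_mat :: "nat \<Rightarrow> nat \<Rightarrow> nat \<Rightarrow> complex mat" where
  "unit_mat q k l = mat q q (\<lambda>(i,j). if i = k \<and> j = l then 1 else 0)"

text \<open>Matrix of the restriction of a linear map M (on q x q matrices, preserving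
  tracelessness) to the space of traceless q x q matrices, w.r.t. the basis
  b_n (n < q^2-1, (k,l) = (n div q, n mod q) ranging over all pairs except (q-1,q-1)):
  b_n = E_kl for k \<noteq> l and b_n = E_kk - E_{q-1,q-1} for k = l.
  The coordinate of a traceless X along b_n is X_kl.\<close>
definition traceless_basis :: "nat \<Rightarrow> nat \<Rightarrow> complex mat" where
  "traceless_basis q n = (if n div q \<noteq> n mod q then unit_mat q (n div q) (n mod q)
       else unit_mat q (n div q) (n div q) - unit_mat q (q-1) (q-1))"

definition restr_traceless :: "nat \<Rightarrow> (complex mat \<Rightarrow> complex mat) \<Rightarrow> complex mat" where
  "restr_traceless q M = mat (q*q - 1) (q*q - 1)
     (\<lambda>(r,c). M (traceless_basis q c) $$ (r div q, r mod q))"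

definition nontriv_eigs_sorted :: "nat \<Rightarrow> (complex mat \<Rightarrow> complex mat) \<Rightarrow> complex list \<Rightarrow> bool" where
  "nontriv_eigs_sorted q M lams \<longleftrightarrow>
     char_poly (restr_traceless q M) = (\<Prod>a\<leftarrow>lams. [:- a, 1:]) \<and>
     sorted_wrt (\<lambda>x y. cmod x \<ge> cmod y) lams"

end

theory Submission
  imports Defs "Jordan_Normal_Form.Schur_Decomposition"
begin

text \<open>The map \<open>\<M>\<^sub>\<plusminus>\<close> on all \<open>q \<times> q\<close> matrices fixes \<open>1\<close> and preserves tracelessness, so its
  matrix \<open>F\<close> has the eigenvalue \<open>1\<close> together with the nontrivial ones. Unitary
  triangularisation (Schur) bounds the sum of the squared moduli of all eigenvalues of \<open>F\<close> by
  its squared Frobenius norm. The entries of \<open>F\<close> are, up to the factor \<open>q\<close>, those of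
  \<open>(US)\<^sup>R\<^sup>\<dagger> (US)\<^sup>R\<close> (or of \<open>(US)\<^sup>R (US)\<^sup>R\<^sup>\<dagger>\<close> for \<open>\<M>\<^sub>-\<close>), so that norm is
  \<open>tr[((US)\<^sup>R (US)\<^sup>R\<^sup>\<dagger>)\<^sup>2] / q\<^sup>2\<close>, which for dual-unitary \<open>U\<close> equals
  \<open>1 + (q\<^sup>2 - 1)(1 - e\<^sub>p(U))\<close>. Ordering by modulus then gives \<open>k |\<lambda>\<^sub>k|\<^sup>2 \<le> \<Sum>\<^sub>i |\<lambda>\<^sub>i|\<^sup>2\<close>.
  Local unitaries act on \<open>U\<^sup>R\<close> and \<open>(US)\<^sup>R\<close> again by unitaries, so they preserve both
  dual-unitarity and \<open>e\<^sub>p\<close>.\<close>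

lemma pair_index_divmod [simp]:
  fixes q a b :: nat
  assumes "b < q"
  shows "(a*q+b) div q = a" "(a*q+b) mod q = b"
  using assms by auto

lemma pair_index_less:
  fixes q a b :: nat
  assumes "a < q" "b < q"
  shows "a*q+b < q*q"
proof -
  have "a*q+b < (a+1)*q" using assms by simp
  also have "\<dots> \<le> q*q" using assms by (intro mult_le_mono1) simp
  finally show ?thesis .
qed

lemma div_less_of_less_square: "(r::nat) < q*q \<Longrightarrow> r div q < q"
  by (intro less_mult_imp_div_less) simp

lemma mod_less_of_less_square: "(r::nat) < q*q \<Longrightarrow> r mod q < q"
  by (cases "q = 0") auto

lemma pair_index_last: "0 < q \<Longrightarrow> (q-1)*q + (q-1) = q*q - (1::nat)"
  by (cases q) (auto simp: algebra_simps)

lemma sum_pair_index: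
  fixes f :: "nat \<Rightarrow> 'a::comm_monoid_add"
  shows "(\<Sum>r<q*q. f r) = (\<Sum>a<q. \<Sum>b<q. f (a*q+b))"
proof -
  have inj: "inj_on (\<lambda>(a,b). a*q+b) ({..<q} \<times> {..<q})"
    by (auto simp: inj_on_def) (metis pair_index_divmod)+
  have "(\<lambda>(a,b). a*q+b) ` ({..<q} \<times> {..<q}) = {..<q*q}"
  proof (intro equalityI subsetI)
    fix r assume "r \<in> {..<q*q}"
    then have "r div q < q" "r mod q < q" and "r = (r div q)*q + r mod q"
      using div_less_of_less_square mod_less_of_less_square by auto
    then show "r \<in> (\<lambda>(a,b). a*q+b) ` ({..<q} \<times> {..<q})"
      by (intro image_eqI[of _ _ "(r div q, r mod q)"]) auto
  qed (auto simp: pair_index_less)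
  then have "(\<Sum>r<q*q. f r) = (\<Sum>p\<in>{..<q}\<times>{..<q}. f ((\<lambda>(a,b). a*q+b) p))"
    using sum.reindex[OF inj, of f] by simp
  also have "\<dots> = (\<Sum>a<q. \<Sum>b<q. f (a*q+b))"
    by (simp add: sum.cartesian_product split_def)
  finally show ?thesis .
qed

lemma index_mult_mat_sum [simp]:
  assumes "dim_col A = dim_row B" "i < dim_row A" "j < dim_col B"
  shows "(A*B) $$ (i,j) = (\<Sum>k<dim_row B. A$$(i,k) * B$$(k,j))"
  using assms by (auto simp: scalar_prod_def lessThan_atLeast0 intro!: sum.cong)

declare index_mult_mat(1)[simp del]

lemma adj_carrier [simp]: "A \<in> carrier_mat n m \<Longrightarrow> adj A \<in> carrier_mat m n"
  by (auto simp: adj_def)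

lemma adj_dims [simp]: "dim_row (adj A) = dim_col A" "dim_col (adj A) = dim_row A"
  by (auto simp: adj_def)

lemma index_adj [simp]: "i < dim_col A \<Longrightarrow> j < dim_row A \<Longrightarrow> adj A $$ (i,j) = cnj (A $$ (j,i))"
  by (auto simp: adj_def)

lemma adj_adj [simp]: "adj (adj A) = A"
  by (rule eq_matI) auto

lemma adj_mult:
  assumes "A \<in> carrier_mat n m" "B \<in> carrier_mat m p"
  shows "adj (A*B) = adj B * adj A"
  by (rule eq_matI) (use assms in \<open>auto simp: mult.commute\<close>)

lemma adj_transpose: "adj (transpose_mat A) = transpose_mat (adj A)"
  by (rule eq_matI) auto

lemma mtrace_one [simp]: "mtrace (1\<^sub>m n) = of_nat n"
  by (simp add: mtrace_def)

lemma mtrace_mult_comm: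
  assumes "A \<in> carrier_mat n m" "B \<in> carrier_mat m n"
  shows "mtrace (A*B) = mtrace (B*A)"
proof -
  have "mtrace (A*B) = (\<Sum>i<n. \<Sum>k<m. A$$(i,k) * B$$(k,i))"
    using assms by (auto simp: mtrace_def)
  also have "\<dots> = (\<Sum>k<m. \<Sum>i<n. B$$(k,i) * A$$(i,k))"
    by (subst sum.swap) (simp add: mult.commute)
  also have "\<dots> = mtrace (B*A)"
    using assms by (auto simp: mtrace_def)
  finally show ?thesis .
qed

definition frobenius_sq :: "complex mat \<Rightarrow> real" where
  "frobenius_sq A = (\<Sum>i<dim_row A. \<Sum>j<dim_col A. (cmod (A$$(i,j)))^2)"

lemma frobenius_sq_one [simp]: "frobenius_sq (1\<^sub>m n) = real n"
proof -
  have "frobenius_sq (1\<^sub>m n) = (\<Sum>i<n. \<Sum>j<n. if i = j then 1 else 0)"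
    unfolding frobenius_sq_def by (intro sum.cong refl) auto
  then show ?thesis by simp
qed

lemma frobenius_sq_eq_trace:
  assumes "A \<in> carrier_mat n m"
  shows "frobenius_sq A = Re (mtrace (A * adj A))"
proof -
  have "mtrace (A * adj A) = (\<Sum>i<n. \<Sum>k<m. A$$(i,k) * cnj (A$$(i,k)))"
    using assms by (auto simp: mtrace_def)
  also have "\<dots> = (\<Sum>i<n. \<Sum>k<m. complex_of_real ((cmod (A$$(i,k)))^2))"
    by (simp add: complex_norm_square[symmetric])
  finally show ?thesis using assms by (simp add: frobenius_sq_def)
qed

lemma frobenius_sq_gram_comm:
  assumes A: "A \<in> carrier_mat n m"
  shows "frobenius_sq (A * adj A) = frobenius_sq (adj A * A)"
proof -
  have A': "adj A \<in> carrier_mat m n" using A by simp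
  have herm: "adj (A * adj A) = A * adj A" "adj (adj A * A) = adj A * A"
    using adj_mult[OF A A'] adj_mult[OF A' A] by simp_all
  have AA': "A * adj A \<in> carrier_mat n n" "adj A * A \<in> carrier_mat m m" using A A' by auto
  have "mtrace ((A * adj A) * (A * adj A)) = mtrace (A * (adj A * (A * adj A)))"
    by (simp add: assoc_mult_mat[OF A A' AA'(1)])
  also have "\<dots> = mtrace ((adj A * (A * adj A)) * A)"
    using A A' by (intro mtrace_mult_comm) auto
  also have "(adj A * (A * adj A)) * A = (adj A * A) * (adj A * A)"
    by (simp add: assoc_mult_mat[OF A' A A', symmetric] assoc_mult_mat[OF AA'(2) A' A])
  finally show ?thesis
    using frobenius_sq_eq_trace[of "A * adj A" n n] frobenius_sq_eq_trace[of "adj A * A" m m] A A' herm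
    by simp
qed

lemma unitary_matI:
  assumes "N \<in> carrier_mat n n" "adj N * N = 1\<^sub>m n"
  shows "unitary_mat n N"
  using assms mat_mult_left_right_inverse[OF adj_carrier[OF assms(1)] assms(1)]
  by (simp add: unitary_mat_def)

lemma unitary_mat_adj:
  assumes "unitary_mat n N"
  shows "unitary_mat n (adj N)"
  using assms by (simp add: unitary_mat_def)

lemma unitary_mat_mult:
  assumes A: "unitary_mat n A" and B: "unitary_mat n B"
  shows "unitary_mat n (A * B)"
proof (rule unitary_matI)
  have Ac: "A \<in> carrier_mat n n" "adj A \<in> carrier_mat n n" and a: "adj A * A = 1\<^sub>m n"
    using A by (auto simp: unitary_mat_def)
  have Bc: "B \<in> carrier_mat n n" "adj B \<in> carrier_mat n n" and b: "adj B * B = 1\<^sub>m n"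
    using B by (auto simp: unitary_mat_def)
  show AB: "A * B \<in> carrier_mat n n" using Ac Bc by simp
  have "adj (A * B) * (A * B) = adj B * (adj A * (A * B))"
    using adj_mult[OF Ac(1) Bc(1)] assoc_mult_mat[OF Bc(2) Ac(2) AB] by simp
  also have "adj A * (A * B) = B"
    using assoc_mult_mat[OF Ac(2) Ac(1) Bc(1)] a Bc by simp
  finally show "adj (A * B) * (A * B) = 1\<^sub>m n" using b by simp
qed

lemma unitary_mat_transpose:
  assumes A: "unitary_mat n A"
  shows "unitary_mat n (transpose_mat A)"
proof (rule unitary_matI)
  have Ac: "A \<in> carrier_mat n n" and e: "A * adj A = 1\<^sub>m n" using A by (auto simp: unitary_mat_def)
  show "transpose_mat A \<in> carrier_mat n n" using Ac by simp
  have "adj (transpose_mat A) * transpose_mat A = transpose_mat (A * adj A)"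
    using transpose_mult[OF Ac adj_carrier[OF Ac]] by (simp add: adj_transpose)
  then show "adj (transpose_mat A) * transpose_mat A = 1\<^sub>m n" using e by simp
qed

lemma unitary_column_orthonormal:
  assumes U: "unitary_mat n U" and "r < n" "s < n"
  shows "(\<Sum>u<n. cnj (U$$(u,r)) * U$$(u,s)) = (if r = s then 1 else 0)"
proof -
  have c: "U \<in> carrier_mat n n" and e: "adj U * U = 1\<^sub>m n" using U by (auto simp: unitary_mat_def)
  have "(adj U * U) $$ (r,s) = (\<Sum>u<n. cnj (U$$(u,r)) * U$$(u,s))" using c assms by simp
  then show ?thesis using e assms by simp
qed

lemma unitary_row_orthonormal:
  assumes U: "unitary_mat n U" and "r < n" "s < n"
  shows "(\<Sum>u<n. U$$(r,u) * cnj (U$$(s,u))) = (if r = s then 1 else 0)"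
proof -
  have c: "U \<in> carrier_mat n n" and e: "U * adj U = 1\<^sub>m n" using U by (auto simp: unitary_mat_def)
  have "(U * adj U) $$ (r,s) = (\<Sum>u<n. U$$(r,u) * cnj (U$$(s,u)))" using c assms by simp
  then show ?thesis using e assms by simp
qed

lemma frobenius_sq_adj: "frobenius_sq (adj A) = frobenius_sq A"
proof -
  have "frobenius_sq (adj A) = (\<Sum>i<dim_col A. \<Sum>j<dim_row A. (cmod (A$$(j,i)))^2)"
    unfolding frobenius_sq_def by (intro sum.cong refl) simp_all
  also have "\<dots> = frobenius_sq A"
    unfolding frobenius_sq_def by (rule sum.swap)
  finally show ?thesis .
qed

lemma frobenius_sq_mult_unitary:
  assumes N: "unitary_mat n N" and A: "A \<in> carrier_mat m n"
  shows "frobenius_sq (A * N) = frobenius_sq A"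
proof -
  have Nc: "N \<in> carrier_mat n n" and N': "adj N \<in> carrier_mat n n" and NN: "N * adj N = 1\<^sub>m n"
    using N by (auto simp: unitary_mat_def)
  have A': "adj A \<in> carrier_mat n m" using A by (rule adj_carrier)
  have "(A * N) * adj (A * N) = A * (N * (adj N * adj A))"
    using adj_mult[OF A Nc] assoc_mult_mat[OF A Nc mult_carrier_mat[OF N' A']] by simp
  also have "N * (adj N * adj A) = adj A"
    using assoc_mult_mat[OF Nc N' A', symmetric] NN left_mult_one_mat[OF A'] by simp
  finally show ?thesis
    using frobenius_sq_eq_trace[OF mult_carrier_mat[OF A Nc]] frobenius_sq_eq_trace[OF A] by simp
qed

lemma frobenius_sq_unitary_conj:
  assumes N: "unitary_mat n N" and A: "A \<in> carrier_mat n n"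
  shows "frobenius_sq (adj N * A * N) = frobenius_sq A"
proof -
  have Nc: "N \<in> carrier_mat n n" using N by (simp add: unitary_mat_def)
  have A': "adj A \<in> carrier_mat n n" using A by (rule adj_carrier)
  have "adj N * A = adj (adj A * N)"
    using adj_mult[OF A' Nc] by simp
  then have "frobenius_sq (adj N * A) = frobenius_sq A"
    using frobenius_sq_mult_unitary[OF N A'] by (simp add: frobenius_sq_adj)
  then show ?thesis
    using frobenius_sq_mult_unitary[OF N mult_carrier_mat[OF adj_carrier[OF Nc] A]] by simp
qed

lemma frobenius_sq_gram_unitary_mult:
  assumes W1: "unitary_mat n W1" and W2: "unitary_mat n W2" and R: "R \<in> carrier_mat n n"
  shows "frobenius_sq ((W1 * R * W2) * adj (W1 * R * W2)) = frobenius_sq (R * adj R)"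
proof -
  have c: "W1 \<in> carrier_mat n n" "adj W1 \<in> carrier_mat n n" "W2 \<in> carrier_mat n n" "adj W2 \<in> carrier_mat n n"
    and w2: "W2 * adj W2 = 1\<^sub>m n" using W1 W2 by (auto simp: unitary_mat_def)
  have R': "adj R \<in> carrier_mat n n" using R by (rule adj_carrier)
  have RR: "R * adj R \<in> carrier_mat n n" using R R' by (rule mult_carrier_mat)
  define X where "X = W1 * R"
  have X: "X \<in> carrier_mat n n" unfolding X_def using c(1) R by (rule mult_carrier_mat)
  have X': "adj X \<in> carrier_mat n n" using X by (rule adj_carrier)
  have "(X * W2) * adj (X * W2) = X * (W2 * (adj W2 * adj X))"
    using adj_mult[OF X c(3)] assoc_mult_mat[OF X c(3) mult_carrier_mat[OF c(4) X']] by simp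
  also have "W2 * (adj W2 * adj X) = adj X"
    using assoc_mult_mat[OF c(3) c(4) X', symmetric] w2 left_mult_one_mat[OF X'] by simp
  also have "X * adj X = W1 * (R * (adj R * adj W1))"
    using adj_mult[OF c(1) R] assoc_mult_mat[OF c(1) R mult_carrier_mat[OF R' c(2)]] by (simp add: X_def)
  also have "\<dots> = adj (adj W1) * (R * adj R) * adj W1"
    using assoc_mult_mat[OF R R' c(2), symmetric] assoc_mult_mat[OF c(1) RR c(2)] by simp
  finally show ?thesis
    using frobenius_sq_unitary_conj[OF unitary_mat_adj[OF W1] RR] by (simp add: X_def)
qed

section \<open>The Schur inequality\<close>

definition normalize_cols :: "nat \<Rightarrow> complex vec list \<Rightarrow> complex mat" where
  "normalize_cols n ws = mat n n (\<lambda>(i,j). ws!j $ i / complex_of_real (sqrt (\<Sum>k<n. (cmod (ws!j$k))^2)))"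

lemma cscalar_prod_self:
  assumes "v \<in> carrier_vec n"
  shows "v \<bullet>c v = complex_of_real ((sqrt (\<Sum>k<n. (cmod (v$k))^2))^2)"
  using assms by (simp add: sum_nonneg scalar_prod_def lessThan_atLeast0 complex_norm_square[symmetric])

lemma unitary_normalize_cols:
  assumes ws: "set ws \<subseteq> carrier_vec n" "corthogonal ws" "length ws = n"
  shows "unitary_mat n (normalize_cols n ws)" and "j < n \<Longrightarrow> sqrt (\<Sum>k<n. (cmod (ws!j$k))^2) \<noteq> 0"
proof -
  define s where "s j = sqrt (\<Sum>k<n. (cmod (ws!j$k))^2)" for j
  have wsj: "j < n \<Longrightarrow> ws!j \<in> carrier_vec n" for j using ws by auto
  have wsnorm: "ws!j \<bullet>c ws!j = complex_of_real ((s j)^2)" if j: "j < n" for j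
    unfolding s_def by (rule cscalar_prod_self[OF wsj[OF j]])
  have s0: "s j \<noteq> 0" if j: "j < n" for j
  proof
    assume "s j = 0"
    then have "ws!j \<bullet>c ws!j = 0" using wsnorm[OF j] by simp
    then show False using corthogonalD[OF ws(2), of j j] ws(3) j by auto
  qed
  then show "j < n \<Longrightarrow> sqrt (\<Sum>k<n. (cmod (ws!j$k))^2) \<noteq> 0" by (simp add: s_def)
  let ?N = "normalize_cols n ws"
  have N: "?N \<in> carrier_mat n n" by (simp add: normalize_cols_def)
  have "adj ?N * ?N = 1\<^sub>m n"
  proof (rule eq_matI)
    fix i j assume "i < dim_row (1\<^sub>m n)" "j < dim_col (1\<^sub>m n)"
    then have i: "i < n" and j: "j < n" by auto
    have "(adj ?N * ?N) $$ (i,j) = (\<Sum>k<n. cnj (ws!i$k) * ws!j$k) / (complex_of_real (s i) * complex_of_real (s j))"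
      using i j N by (simp add: normalize_cols_def s_def sum_divide_distrib algebra_simps)
    also have "(\<Sum>k<n. cnj (ws!i$k) * ws!j$k) = ws!j \<bullet>c ws!i"
      using wsj[OF i] wsj[OF j] by (simp add: scalar_prod_def lessThan_atLeast0 mult.commute)
    finally have eq: "(adj ?N * ?N) $$ (i,j) = (ws!j \<bullet>c ws!i) / (complex_of_real (s i) * complex_of_real (s j))" .
    show "(adj ?N * ?N) $$ (i,j) = 1\<^sub>m n $$ (i,j)"
    proof (cases "i = j")
      case True
      then show ?thesis using eq wsnorm[OF i] s0[OF i] i by (simp add: power2_eq_square)
    next
      case False
      then have "ws!j \<bullet>c ws!i = 0" using corthogonalD[OF ws(2), of j i] ws(3) i j by auto
      then show ?thesis using eq False i j by simp
    qed
  qed (use N in auto)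
  then show "unitary_mat n ?N" using N by (rule unitary_matI[rotated])
qed

lemma exists_unitary_first_column:
  assumes v: "v \<in> carrier_vec n" and v0: "v \<noteq> 0\<^sub>v n"
  shows "\<exists>N c. unitary_mat n N \<and> c \<noteq> 0 \<and> (\<forall>i<n. N $$ (i,0) = c * v $ i)"
proof -
  interpret cof_vec_space n "TYPE(complex)" .
  define b where "b = basis_completion v"
  define ws where "ws = gram_schmidt n b"
  from basis_completion[OF v v0, folded b_def]
  have dist_b: "distinct b" and indep: "\<not> lin_dep (set b)" and b: "set b \<subseteq> carrier_vec n"
    and hdb: "hd b = v" and len_b: "length b = n" by auto
  have n: "n \<noteq> 0" using v0 v by auto
  from hdb len_b n obtain vs where bv: "b = v # vs" by (cases b) auto
  from gram_schmidt_result[OF b dist_b indep refl, folded ws_def]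
  have ws: "set ws \<subseteq> carrier_vec n" "corthogonal ws" "length ws = n" by (auto simp: len_b)
  have "hd ws = v" using gram_schmidt_hd[OF v, of vs] by (simp add: ws_def bv)
  then have ws0: "ws ! 0 = v" using ws(3) n by (cases ws) auto
  define c where "c = 1 / complex_of_real (sqrt (\<Sum>k<n. (cmod (v$k))^2))"
  have "c \<noteq> 0" using unitary_normalize_cols(2)[OF ws, of 0] n ws0 by (simp add: c_def)
  moreover have "normalize_cols n ws $$ (i,0) = c * v $ i" if "i < n" for i
    using that n ws0 by (simp add: normalize_cols_def c_def)
  ultimately show ?thesis using unitary_normalize_cols(1)[OF ws] by blast
qed

lemma unitary_deflation:
  assumes A: "A \<in> carrier_mat n n" and e: "eigenvalue A e"
  shows "0 < n \<and> (\<exists>N. unitary_mat n N \<and> (\<forall>i<n. (adj N * A * N) $$ (i,0) = (if i = 0 then e else 0)))"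
proof -
  obtain v where v: "v \<in> carrier_vec n" "v \<noteq> 0\<^sub>v n" and eig: "A *\<^sub>v v = e \<cdot>\<^sub>v v"
    using e A by (auto simp: eigenvalue_def eigenvector_def)
  obtain N c where N: "unitary_mat n N" and c: "c \<noteq> 0" and col: "\<forall>i<n. N $$ (i,0) = c * v $ i"
    using exists_unitary_first_column[OF v] by blast
  have Nc: "N \<in> carrier_mat n n" "adj N \<in> carrier_mat n n" and NN: "adj N * N = 1\<^sub>m n"
    using N by (auto simp: unitary_mat_def)
  have n: "0 < n" using v by (cases n) auto
  have AN0: "(A * N) $$ (k,0) = e * N $$ (k,0)" if k: "k < n" for k
  proof -
    have "(A * N) $$ (k,0) = c * (\<Sum>l<n. A $$ (k,l) * v $ l)"
      using A Nc k n col by (simp add: sum_distrib_left mult_ac)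
    also have "(\<Sum>l<n. A $$ (k,l) * v $ l) = (A *\<^sub>v v) $ k"
      using A v k by (auto simp: scalar_prod_def lessThan_atLeast0 intro!: sum.cong)
    finally show ?thesis using eig v k col by simp
  qed
  have "(adj N * A * N) $$ (i,0) = (if i = 0 then e else 0)" if i: "i < n" for i
  proof -
    have "(adj N * A * N) $$ (i,0) = (\<Sum>k<n. adj N $$ (i,k) * (e * N $$ (k,0)))"
      using A Nc i n AN0 assoc_mult_mat[OF Nc(2) A Nc(1)] by simp
    also have "\<dots> = e * (adj N * N) $$ (i,0)"
      using Nc i n by (simp add: sum_distrib_left algebra_simps)
    finally show ?thesis using NN i n by simp
  qed
  then show ?thesis using N n by blast
qed

definition lower_right_block :: "complex mat \<Rightarrow> complex mat" where
  "lower_right_block A = mat (dim_row A - 1) (dim_col A - 1) (\<lambda>(i,j). A $$ (i+1, j+1))"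

lemma char_poly_first_column_zeros:
  assumes A: "A \<in> carrier_mat (Suc m) (Suc m)"
    and col: "\<forall>i<Suc m. A $$ (i,0) = (if i = 0 then e else 0)"
  shows "char_poly A = [:-e, 1:] * char_poly (lower_right_block A)"
proof -
  define A1 where "A1 = mat 1 1 (\<lambda>_. e)"
  define A2 where "A2 = mat 1 m (\<lambda>(i,j). A $$ (i, j+1))"
  have A3: "lower_right_block A \<in> carrier_mat m m" using A by (simp add: lower_right_block_def)
  have "A = four_block_mat A1 A2 (0\<^sub>m m 1) (lower_right_block A)"
    by (rule eq_matI) (use A col in \<open>auto simp: A1_def A2_def lower_right_block_def four_block_mat_def\<close>)
  then have "char_poly A = char_poly A1 * char_poly (lower_right_block A)"
    using char_poly_four_block_zeros_col[OF _ _ A3, of A1 A2] by (simp add: A1_def A2_def)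
  moreover have "char_poly A1 = [:-e, 1:]"
    by (simp add: A1_def char_poly_defs det_def sign_def)
  ultimately show ?thesis by simp
qed

lemma frobenius_sq_first_column_zeros:
  assumes A: "A \<in> carrier_mat (Suc m) (Suc m)"
    and col: "\<forall>i<Suc m. A $$ (i,0) = (if i = 0 then e else 0)"
  shows "(cmod e)^2 + frobenius_sq (lower_right_block A) \<le> frobenius_sq A"
proof -
  have "frobenius_sq A = (\<Sum>j<Suc m. (cmod (A$$(0,j)))^2) + (\<Sum>i<m. \<Sum>j<Suc m. (cmod (A$$(Suc i,j)))^2)"
    using A by (simp add: frobenius_sq_def sum.lessThan_Suc_shift del: sum.lessThan_Suc)
  also have "\<dots> = (cmod e)^2 + (\<Sum>j<m. (cmod (A$$(0,Suc j)))^2)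
      + (\<Sum>i<m. (\<Sum>j<m. (cmod (A$$(Suc i,Suc j)))^2))"
    using col by (simp add: sum.lessThan_Suc_shift del: sum.lessThan_Suc)
  also have "(\<Sum>i<m. \<Sum>j<m. (cmod (A$$(Suc i,Suc j)))^2) = frobenius_sq (lower_right_block A)"
    using A by (simp add: frobenius_sq_def lower_right_block_def)
  finally show ?thesis by (simp add: sum_nonneg)
qed

lemma unitary_deflation_char_poly:
  assumes A: "A \<in> carrier_mat n n" and cp: "char_poly A = [:-e, 1:] * p"
  shows "\<exists>m B. n = Suc m \<and> B \<in> carrier_mat m m \<and> char_poly B = p
    \<and> (cmod e)^2 + frobenius_sq B \<le> frobenius_sq A"
proof -
  have "eigenvalue A e" using cp by (simp add: eigenvalue_root_char_poly[OF A])
  then obtain N where n: "0 < n" and N: "unitary_mat n N"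
    and col: "\<forall>i<n. (adj N * A * N) $$ (i,0) = (if i = 0 then e else 0)"
    using unitary_deflation[OF A] by blast
  obtain m where m: "n = Suc m" using n by (cases n) auto
  have Nc: "N \<in> carrier_mat n n" "adj N \<in> carrier_mat n n" using N by (auto simp: unitary_mat_def)
  define A' where "A' = adj N * A * N"
  have A': "A' \<in> carrier_mat n n"
    using mult_carrier_mat[OF mult_carrier_mat[OF Nc(2) A] Nc(1)] by (simp add: A'_def)
  have "similar_mat A' A"
    using A A' N by (intro similar_matI[of _ _ "adj N" N n]) (auto simp: A'_def unitary_mat_def)
  then have cp': "char_poly A' = [:-e, 1:] * p"
    using cp char_poly_similar by metis
  have A'm: "A' \<in> carrier_mat (Suc m) (Suc m)" and col': "\<forall>i<Suc m. A' $$ (i,0) = (if i = 0 then e else 0)"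
    using A' col m by (simp_all add: A'_def)
  have "[:-e, 1:] * char_poly (lower_right_block A') = [:-e, 1:] * p"
    using cp' char_poly_first_column_zeros[OF A'm col'] by simp
  moreover have "[:-e, 1:] \<noteq> (0 :: complex poly)" by simp
  ultimately have "char_poly (lower_right_block A') = p"
    using mult_left_cancel by blast
  moreover have "(cmod e)^2 + frobenius_sq (lower_right_block A') \<le> frobenius_sq A'"
    by (rule frobenius_sq_first_column_zeros[OF A'm col'])
  moreover have "frobenius_sq A' = frobenius_sq A"
    unfolding A'_def by (rule frobenius_sq_unitary_conj[OF N A])
  moreover have "lower_right_block A' \<in> carrier_mat m m"
    using A'm by (simp add: lower_right_block_def)
  ultimately show ?thesis using m by auto
qed

lemma sum_sq_eigenvalues_le_frobenius_sq:
  assumes "A \<in> carrier_mat n n" "char_poly A = (\<Prod>e\<leftarrow>es. [:-e, 1:])"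
  shows "(\<Sum>e\<leftarrow>es. (cmod e)^2) \<le> frobenius_sq A"
  using assms
proof (induction es arbitrary: n A)
  case Nil
  then show ?case by (simp add: frobenius_sq_def sum_nonneg)
next
  case (Cons e es n A)
  then obtain m B where B: "B \<in> carrier_mat m m" "char_poly B = (\<Prod>e\<leftarrow>es. [:-e, 1:])"
    and le: "(cmod e)^2 + frobenius_sq B \<le> frobenius_sq A"
    using unitary_deflation_char_poly[of A n e "\<Prod>e\<leftarrow>es. [:-e, 1:]"] by auto
  then show ?case using Cons.IH[OF B] by simp
qed

definition kernel_map :: "nat \<Rightarrow> (nat \<Rightarrow> nat \<Rightarrow> nat \<Rightarrow> nat \<Rightarrow> complex) \<Rightarrow> complex mat \<Rightarrow> complex mat" where
  "kernel_map q K a = mat q q (\<lambda>(x,y). \<Sum>k<q. \<Sum>l<q. a$$(k,l) * K k l x y)"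

text \<open>The matrix of \<open>kernel_map q K\<close> when a \<open>q \<times> q\<close> matrix \<open>a\<close> is identified with the
  vector of length \<open>q*q\<close> whose entry \<open>r\<close> is \<open>a $$ (r div q, r mod q)\<close>.\<close>

definition kernel_mat :: "nat \<Rightarrow> (nat \<Rightarrow> nat \<Rightarrow> nat \<Rightarrow> nat \<Rightarrow> complex) \<Rightarrow> complex mat" where
  "kernel_mat q K = mat (q*q) (q*q) (\<lambda>(r,c). K (c div q) (c mod q) (r div q) (r mod q))"

definition unital_kernel :: "nat \<Rightarrow> (nat \<Rightarrow> nat \<Rightarrow> nat \<Rightarrow> nat \<Rightarrow> complex) \<Rightarrow> bool" where
  "unital_kernel q K \<longleftrightarrow> (\<forall>x<q. \<forall>y<q. (\<Sum>k<q. K k k x y) = (if x = y then 1 else 0))"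

definition trace_preserving_kernel :: "nat \<Rightarrow> (nat \<Rightarrow> nat \<Rightarrow> nat \<Rightarrow> nat \<Rightarrow> complex) \<Rightarrow> bool" where
  "trace_preserving_kernel q K \<longleftrightarrow> (\<forall>k<q. \<forall>l<q. (\<Sum>x<q. K k l x x) = (if k = l then 1 else 0))"

lemma kernel_map_carrier [simp]: "kernel_map q K a \<in> carrier_mat q q"
  by (simp add: kernel_map_def)

lemma kernel_mat_carrier [simp]: "kernel_mat q K \<in> carrier_mat (q*q) (q*q)"
  by (simp add: kernel_mat_def)

lemma mtrace_eq_sum_diag: "B \<in> carrier_mat q q \<Longrightarrow> mtrace B = (\<Sum>a<q. B$$(a,a))"
  by (simp add: mtrace_def)

lemma kernel_map_one:
  assumes "unital_kernel q K"
  shows "kernel_map q K (1\<^sub>m q) = 1\<^sub>m q"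
proof (rule eq_matI)
  fix x y assume "x < dim_row (1\<^sub>m q)" "y < dim_col (1\<^sub>m q)"
  then have x: "x < q" and y: "y < q" by auto
  have "kernel_map q K (1\<^sub>m q) $$ (x,y) = (\<Sum>k<q. \<Sum>l<q. (if l = k then K k k x y else 0))"
    using x y by (simp add: kernel_map_def if_distrib[of "\<lambda>t. t * _"] cong: if_cong)
  then show "kernel_map q K (1\<^sub>m q) $$ (x,y) = 1\<^sub>m q $$ (x,y)"
    using assms x y by (simp add: unital_kernel_def)
qed (auto simp: kernel_map_def)

lemma mtrace_kernel_map:
  assumes K: "trace_preserving_kernel q K" and B: "B \<in> carrier_mat q q"
  shows "mtrace (kernel_map q K B) = mtrace B"
proof -
  have "mtrace (kernel_map q K B) = (\<Sum>x<q. \<Sum>k<q. \<Sum>l<q. B$$(k,l) * K k l x x)"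
    by (simp add: mtrace_def kernel_map_def)
  also have "\<dots> = (\<Sum>k<q. \<Sum>l<q. \<Sum>x<q. B$$(k,l) * K k l x x)"
    by (subst sum.swap, rule sum.cong[OF refl], rule sum.swap)
  also have "\<dots> = (\<Sum>k<q. \<Sum>l<q. (if l = k then B$$(k,k) else 0))"
    using K by (intro sum.cong refl) (auto simp: trace_preserving_kernel_def simp flip: sum_distrib_left)
  also have "\<dots> = mtrace B" by (simp add: mtrace_eq_sum_diag[OF B])
  finally show ?thesis .
qed

lemma frobenius_sq_kernel_mat:
  "frobenius_sq (kernel_mat q K) = (\<Sum>x<q. \<Sum>y<q. \<Sum>k<q. \<Sum>l<q. (cmod (K k l x y))^2)"
  by (simp add: frobenius_sq_def kernel_mat_def sum_pair_index)

section \<open>Splitting off the identity\<close>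

lemma traceless_basis_carrier [simp]: "traceless_basis q c \<in> carrier_mat q q"
  by (auto simp: traceless_basis_def unit_mat_def intro!: minus_carrier_mat)

lemma index_traceless_basis:
  assumes "x < q" "y < q"
  shows "traceless_basis q c $$ (x,y) =
     (if c div q \<noteq> c mod q then (if x = c div q \<and> y = c mod q then 1 else 0)
      else (if x = c div q \<and> y = c div q then 1 else 0) - (if x = q-1 \<and> y = q-1 then 1 else 0))"
  using assms by (simp add: traceless_basis_def unit_mat_def)

lemma traceless_basis_diag_index:
  fixes q c :: nat
  assumes c: "c < q*q - 1" and d: "c div q = c mod q"
  shows "c div q \<noteq> q - 1"
proof
  assume h: "c div q = q - 1"
  have q0: "0 < q" using c by (cases q) auto
  have "c = (c div q)*q + c mod q" by simp
  also have "\<dots> = q*q - 1" using h d pair_index_last[OF q0] by simp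
  finally show False using c by simp
qed

lemma traceless_basis_coord:
  assumes c: "c < q*q - 1" and i: "i < q*q - 1"
  shows "traceless_basis q c $$ (i div q, i mod q) = (if i = c then 1 else 0)"
proof -
  have q0: "0 < q" using c by (cases q) auto
  have iq: "i div q < q" "i mod q < q"
    using i div_less_of_less_square[of i q] mod_less_of_less_square[of i q] by auto
  have "\<not> (i div q = q-1 \<and> i mod q = q-1)"
  proof
    assume "i div q = q-1 \<and> i mod q = q-1"
    then have "i = (q-1)*q + (q-1)" using div_mult_mod_eq[of i q] by simp
    then show False using pair_index_last[OF q0] i by simp
  qed
  moreover have "(i div q = c div q \<and> i mod q = c mod q) \<longleftrightarrow> i = c"
    by (metis div_mult_mod_eq)
  ultimately show ?thesis
    using index_traceless_basis[OF iq] traceless_basis_diag_index[OF c] by auto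
qed

lemma mtrace_traceless_basis:
  assumes c: "c < q*q - 1"
  shows "mtrace (traceless_basis q c) = 0"
proof (cases "c div q = c mod q")
  case True
  have cq: "c div q < q" "0 < q"
    using c div_less_of_less_square[of c q] by (auto intro: Nat.gr0I)
  have "mtrace (traceless_basis q c)
      = (\<Sum>a<q. (if a = c div q then 1 else 0) - (if a = q-1 then 1 else 0))"
    unfolding mtrace_eq_sum_diag[OF traceless_basis_carrier]
    by (intro sum.cong refl) (use True in \<open>auto simp: index_traceless_basis\<close>)
  then show ?thesis using cq by (simp add: sum_subtractf)
next
  case False
  have "mtrace (traceless_basis q c) = (\<Sum>a<q. 0)"
    unfolding mtrace_eq_sum_diag[OF traceless_basis_carrier]
    by (intro sum.cong refl) (use False in \<open>auto simp: index_traceless_basis\<close>)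
  then show ?thesis by simp
qed

text \<open>The basis \<open>1, b\<^sub>0, \<dots>, b\<^bsub>q*q-2\<^esub>\<close> of all \<open>q \<times> q\<close> matrices, its matrix of vectorised
  columns, and the inverse matrix: row \<open>0\<close> of \<open>adapted_coord_mat q\<close> reads off
  \<open>tr B / q\<close>, row \<open>i > 0\<close> the coordinate of \<open>B - (tr B / q) 1\<close> along \<open>b\<^bsub>i-1\<^esub>\<close>.\<close>

definition adapted_basis :: "nat \<Rightarrow> nat \<Rightarrow> complex mat" where
  "adapted_basis q c = (if c = 0 then 1\<^sub>m q else traceless_basis q (c-1))"

definition adapted_basis_mat :: "nat \<Rightarrow> complex mat" where
  "adapted_basis_mat q = mat (q*q) (q*q) (\<lambda>(r,c). adapted_basis q c $$ (r div q, r mod q))"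

definition diag_weight :: "nat \<Rightarrow> nat \<Rightarrow> complex" where
  "diag_weight q r = (if r div q = r mod q then 1 / of_nat q else 0)"

definition adapted_coord_mat :: "nat \<Rightarrow> complex mat" where
  "adapted_coord_mat q = mat (q*q) (q*q) (\<lambda>(i,r). if i = 0 then diag_weight q r
      else (if r = i-1 then 1 else 0) - (if (i-1) div q = (i-1) mod q then diag_weight q r else 0))"

lemma adapted_basis_carrier [simp]: "adapted_basis q c \<in> carrier_mat q q"
  by (simp add: adapted_basis_def)

lemma adapted_basis_mat_carrier [simp]: "adapted_basis_mat q \<in> carrier_mat (q*q) (q*q)"
  by (simp add: adapted_basis_mat_def)

lemma adapted_coord_mat_carrier [simp]: "adapted_coord_mat q \<in> carrier_mat (q*q) (q*q)"
  by (simp add: adapted_coord_mat_def)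

lemma sum_diag_weight:
  "(\<Sum>r<q*q. diag_weight q r * f (r div q) (r mod q)) = (\<Sum>a<q. f a a) / of_nat q"
proof -
  have "(\<Sum>r<q*q. diag_weight q r * f (r div q) (r mod q)) = (\<Sum>a<q. \<Sum>b<q. diag_weight q (a*q+b) * f a b)"
    by (simp add: sum_pair_index)
  also have "\<dots> = (\<Sum>a<q. \<Sum>b<q. (if b = a then f a a / of_nat q else 0))"
    by (intro sum.cong refl) (auto simp: diag_weight_def)
  finally show ?thesis by (simp add: sum_divide_distrib)
qed

lemma adapted_coord_mat_apply:
  assumes i: "i < q*q" and B: "B \<in> carrier_mat q q"
  shows "(\<Sum>r<q*q. adapted_coord_mat q $$ (i,r) * B $$ (r div q, r mod q)) =
    (if i = 0 then mtrace B / of_nat q else B $$ ((i-1) div q, (i-1) mod q)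
       - (if (i-1) div q = (i-1) mod q then mtrace B / of_nat q else 0))"
proof (cases "i = 0")
  case True
  then show ?thesis using i sum_diag_weight[of q "\<lambda>a b. B$$(a,b)"]
    by (simp add: adapted_coord_mat_def mtrace_eq_sum_diag[OF B])
next
  case False
  have "(\<Sum>r<q*q. adapted_coord_mat q $$ (i,r) * B $$ (r div q, r mod q)) =
     (\<Sum>r<q*q. (if r = i-1 then B $$ (r div q, r mod q) else 0))
     - (if (i-1) div q = (i-1) mod q then (\<Sum>r<q*q. diag_weight q r * B $$ (r div q, r mod q)) else 0)"
    using i False by (simp add: adapted_coord_mat_def sum_subtractf algebra_simps
        if_distrib[of "\<lambda>x. x * _"] cong: if_cong)
  also have "(\<Sum>r<q*q. (if r = i-1 then B $$ (r div q, r mod q) else 0)) = B $$ ((i-1) div q, (i-1) mod q)"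
    using i False by (simp add: sum.delta)
  finally show ?thesis
    using False sum_diag_weight[of q "\<lambda>a b. B$$(a,b)"] by (simp add: mtrace_eq_sum_diag[OF B])
qed

lemma adapted_coord_mat_mult_col:
  assumes q0: "0 < q" and i: "i < q*q" and c: "c < q*q" and B: "B \<in> carrier_mat q q"
    and tr: "c \<noteq> 0 \<Longrightarrow> mtrace B = 0" and one: "c = 0 \<Longrightarrow> B = 1\<^sub>m q"
    and Y: "Y \<in> carrier_mat (q*q) (q*q)" and Yc: "\<And>r. r < q*q \<Longrightarrow> Y $$ (r,c) = B $$ (r div q, r mod q)"
  shows "(adapted_coord_mat q * Y) $$ (i,c) =
    (if c = 0 then (if i = 0 then 1 else 0) else if i = 0 then 0 else B $$ ((i-1) div q, (i-1) mod q))"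
proof -
  have iq: "(i-1) div q < q" "(i-1) mod q < q"
    using i div_less_of_less_square[of "i-1" q] mod_less_of_less_square[of "i-1" q] by auto
  have "(adapted_coord_mat q * Y) $$ (i,c) = (\<Sum>r<q*q. adapted_coord_mat q $$ (i,r) * Y $$ (r,c))"
    using i c Y by (simp add: adapted_coord_mat_def)
  also have "\<dots> = (\<Sum>r<q*q. adapted_coord_mat q $$ (i,r) * B $$ (r div q, r mod q))"
    using Yc by (intro sum.cong) auto
  finally show ?thesis
    using adapted_coord_mat_apply[OF i B] q0 iq tr one by (cases "c = 0") auto
qed

lemma adapted_coord_mat_inverse:
  assumes q0: "0 < q"
  shows "adapted_coord_mat q * adapted_basis_mat q = 1\<^sub>m (q*q)"
proof (rule eq_matI)
  fix i c assume "i < dim_row (1\<^sub>m (q*q))" "c < dim_col (1\<^sub>m (q*q))"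
  then have i: "i < q*q" and c: "c < q*q" by auto
  have "(adapted_coord_mat q * adapted_basis_mat q) $$ (i,c) =
    (if c = 0 then (if i = 0 then 1 else 0) else if i = 0 then 0
     else adapted_basis q c $$ ((i-1) div q, (i-1) mod q))"
    using c by (intro adapted_coord_mat_mult_col[OF q0 i c])
      (auto simp: adapted_basis_def adapted_basis_mat_def mtrace_traceless_basis)
  also have "\<dots> = 1\<^sub>m (q*q) $$ (i,c)"
    using i c traceless_basis_coord[of "c-1" q "i-1"] by (auto simp: adapted_basis_def)
  finally show "(adapted_coord_mat q * adapted_basis_mat q) $$ (i,c) = 1\<^sub>m (q*q) $$ (i,c)" .
qed (auto simp: adapted_coord_mat_def adapted_basis_mat_def)

lemma kernel_mat_mult_adapted_basis_mat:
  assumes s: "s < q*q" and c: "c < q*q"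
  shows "(kernel_mat q K * adapted_basis_mat q) $$ (s,c) = kernel_map q K (adapted_basis q c) $$ (s div q, s mod q)"
proof -
  have "(kernel_mat q K * adapted_basis_mat q) $$ (s,c)
      = (\<Sum>r<q*q. K (r div q) (r mod q) (s div q) (s mod q) * adapted_basis q c $$ (r div q, r mod q))"
    using s c by (simp add: kernel_mat_def adapted_basis_mat_def)
  also have "\<dots> = (\<Sum>a<q. \<Sum>b<q. K a b (s div q) (s mod q) * adapted_basis q c $$ (a, b))"
    by (simp add: sum_pair_index)
  also have "\<dots> = kernel_map q K (adapted_basis q c) $$ (s div q, s mod q)"
    using div_less_of_less_square[OF s] mod_less_of_less_square[OF s] by (simp add: kernel_map_def mult.commute)
  finally show ?thesis .
qed

lemma restr_traceless_carrier [simp]: "restr_traceless q M \<in> carrier_mat (q*q-1) (q*q-1)"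
  by (simp add: restr_traceless_def)

lemma restr_traceless_dims [simp]:
  "dim_row (restr_traceless q M) = q*q-1" "dim_col (restr_traceless q M) = q*q-1"
  by (simp_all add: restr_traceless_def)

lemma kernel_mat_adapted_block:
  assumes q0: "0 < q" and unital: "unital_kernel q K" and tp: "trace_preserving_kernel q K"
  shows "adapted_coord_mat q * (kernel_mat q K * adapted_basis_mat q) =
    four_block_mat (1\<^sub>m 1) (0\<^sub>m 1 (q*q-1)) (0\<^sub>m (q*q-1) 1) (restr_traceless q (kernel_map q K))"
    (is "_ = ?B")
proof -
  have qq: "1 + (q*q-1) = q*q" using q0 by simp
  show ?thesis
  proof (rule eq_matI)
    fix i c assume "i < dim_row ?B" "c < dim_col ?B"
    then have i: "i < q*q" and c: "c < q*q" using qq by auto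
    have "(adapted_coord_mat q * (kernel_mat q K * adapted_basis_mat q)) $$ (i,c) =
      (if c = 0 then (if i = 0 then 1 else 0) else if i = 0 then 0
       else kernel_map q K (adapted_basis q c) $$ ((i-1) div q, (i-1) mod q))"
      using c unital tp mult_carrier_mat[OF kernel_mat_carrier adapted_basis_mat_carrier]
      by (intro adapted_coord_mat_mult_col[OF q0 i c])
        (auto simp: kernel_mat_mult_adapted_basis_mat adapted_basis_def kernel_map_one
          mtrace_kernel_map mtrace_traceless_basis intro: mult_carrier_mat)
    then show "(adapted_coord_mat q * (kernel_mat q K * adapted_basis_mat q)) $$ (i,c) = ?B $$ (i,c)"
      using i c qq by (simp add: adapted_basis_def four_block_mat_def restr_traceless_def)
  qed (use qq in \<open>auto simp: adapted_coord_mat_def adapted_basis_mat_def\<close>)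
qed

lemma char_poly_kernel_mat:
  assumes q0: "0 < q" and unital: "unital_kernel q K" and tp: "trace_preserving_kernel q K"
  shows "char_poly (kernel_mat q K) = [:-1, 1:] * char_poly (restr_traceless q (kernel_map q K))"
proof -
  let ?F = "kernel_mat q K" and ?P = "adapted_basis_mat q" and ?Q = "adapted_coord_mat q"
  let ?B = "four_block_mat (1\<^sub>m 1) (0\<^sub>m 1 (q*q-1)) (0\<^sub>m (q*q-1) 1) (restr_traceless q (kernel_map q K))"
  have qq: "1 + (q*q-1) = q*q" using q0 by simp
  have QP: "?Q * ?P = 1\<^sub>m (q*q)" by (rule adapted_coord_mat_inverse[OF q0])
  have PQ: "?P * ?Q = 1\<^sub>m (q*q)"
    by (rule mat_mult_left_right_inverse[OF adapted_coord_mat_carrier adapted_basis_mat_carrier QP])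
  have "?B \<in> carrier_mat (1 + (q*q-1)) (1 + (q*q-1))"
    by (rule four_block_carrier_mat) auto
  then have B: "?B \<in> carrier_mat (q*q) (q*q)" unfolding qq .
  have FP: "?F * ?P \<in> carrier_mat (q*q) (q*q)"
    by (rule mult_carrier_mat[OF kernel_mat_carrier adapted_basis_mat_carrier])
  have "?P * ?B * ?Q = ?P * (?Q * (?F * ?P)) * ?Q"
    using kernel_mat_adapted_block[OF q0 unital tp] by simp
  also have "?P * (?Q * (?F * ?P)) = (?P * ?Q) * (?F * ?P)"
    by (rule assoc_mult_mat[symmetric, OF adapted_basis_mat_carrier adapted_coord_mat_carrier FP])
  also have "(?P * ?Q) * (?F * ?P) = ?F * ?P"
    using PQ left_mult_one_mat[OF FP] by simp
  also have "?F * ?P * ?Q = ?F * (?P * ?Q)"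
    by (rule assoc_mult_mat[OF kernel_mat_carrier adapted_basis_mat_carrier adapted_coord_mat_carrier])
  also have "\<dots> = ?F"
    using PQ right_mult_one_mat[OF kernel_mat_carrier] by simp
  finally have "similar_mat ?F ?B"
    using B PQ QP by (intro similar_matI[of _ _ ?P ?Q "q*q"]) auto
  then have "char_poly ?F = char_poly ?B" by (rule char_poly_similar)
  also have "\<dots> = char_poly (1\<^sub>m 1 :: complex mat) * char_poly (restr_traceless q (kernel_map q K))"
    by (rule char_poly_four_block_zeros_col) auto
  also have "char_poly (1\<^sub>m 1 :: complex mat) = [:-1, 1:]"
    by (simp add: char_poly_defs det_def sign_def)
  finally show ?thesis .
qed

section \<open>The maps \<open>\<M>\<^sub>\<plusminus>\<close> as kernel maps\<close>

lemma tens_carrier [simp]: "tens q A B \<in> carrier_mat (q*q) (q*q)"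
  by (simp add: tens_def)

lemma tens_dims [simp]: "dim_row (tens q A B) = q*q" "dim_col (tens q A B) = q*q"
  by (simp_all add: tens_def)

lemma index_tens:
  "r < q*q \<Longrightarrow> c < q*q \<Longrightarrow> tens q A B $$ (r,c) = A $$ (r div q, c div q) * B $$ (r mod q, c mod q)"
  by (simp add: tens_def)

lemma index_tens_pair:
  assumes "a < q" "b < q" "c < q" "d < q"
  shows "tens q A B $$ (a*q+b, c*q+d) = A$$(a,c) * B$$(b,d)"
  using assms by (simp add: index_tens pair_index_less)

definition Mplus_kernel :: "nat \<Rightarrow> complex mat \<Rightarrow> nat \<Rightarrow> nat \<Rightarrow> nat \<Rightarrow> nat \<Rightarrow> complex" where
  "Mplus_kernel q U k l x y = (1 / of_nat q) * (\<Sum>i<q. \<Sum>g<q. cnj (U$$(k*q+g, i*q+x)) * U$$(l*q+g, i*q+y))"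

definition Mminus_kernel :: "nat \<Rightarrow> complex mat \<Rightarrow> nat \<Rightarrow> nat \<Rightarrow> nat \<Rightarrow> nat \<Rightarrow> complex" where
  "Mminus_kernel q U k l x y = (1 / of_nat q) * (\<Sum>i<q. \<Sum>g<q. cnj (U$$(g*q+k, x*q+i)) * U$$(g*q+l, y*q+i))"

lemma index_Mplus:
  assumes U: "U \<in> carrier_mat (q*q) (q*q)" and x: "x < q" and y: "y < q"
  shows "Mplus q U a $$ (x,y) = kernel_map q (Mplus_kernel q U) a $$ (x,y)"
proof -
  let ?T = "tens q a (1\<^sub>m q)"
  have sandwich: "(adj U * ?T * U) $$ (i*q+x, i*q+y) =
     (\<Sum>k<q. \<Sum>l<q. \<Sum>g<q. cnj (U$$(k*q+g, i*q+x)) * a$$(k,l) * U$$(l*q+g, i*q+y))" if i: "i < q" for i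
  proof -
    have r: "i*q+x < q*q" "i*q+y < q*q" using pair_index_less i x y by auto
    have "(adj U * ?T * U) $$ (i*q+x, i*q+y)
      = (\<Sum>w<q*q. (\<Sum>u<q*q. cnj (U$$(u,i*q+x)) * ?T$$(u,w)) * U$$(w,i*q+y))"
      using U r by simp
    also have "\<dots> = (\<Sum>l<q. \<Sum>g'<q. (\<Sum>k<q. \<Sum>g<q. cnj (U$$(k*q+g,i*q+x)) * (a$$(k,l) * (if g = g' then 1 else 0))) * U$$(l*q+g',i*q+y))"
      by (simp add: sum_pair_index index_tens_pair)
    also have "\<dots> = (\<Sum>l<q. \<Sum>g'<q. \<Sum>k<q. cnj (U$$(k*q+g',i*q+x)) * a$$(k,l) * U$$(l*q+g',i*q+y))"
      by (simp add: sum_distrib_right if_distrib[of "\<lambda>t. _ * t"] cong: if_cong)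
    also have "\<dots> = (\<Sum>l<q. \<Sum>k<q. \<Sum>g'<q. cnj (U$$(k*q+g',i*q+x)) * a$$(k,l) * U$$(l*q+g',i*q+y))"
      by (rule sum.cong[OF refl], rule sum.swap)
    also have "\<dots> = (\<Sum>k<q. \<Sum>l<q. \<Sum>g'<q. cnj (U$$(k*q+g',i*q+x)) * a$$(k,l) * U$$(l*q+g',i*q+y))"
      by (rule sum.swap)
    finally show ?thesis .
  qed
  have "Mplus q U a $$ (x,y) = (1 / of_nat q) *
      (\<Sum>i<q. \<Sum>k<q. \<Sum>l<q. \<Sum>g<q. cnj (U$$(k*q+g, i*q+x)) * a$$(k,l) * U$$(l*q+g, i*q+y))"
    using x y sandwich by (simp add: Mplus_def ptrace1_def)
  also have "(\<Sum>i<q. \<Sum>k<q. \<Sum>l<q. \<Sum>g<q. cnj (U$$(k*q+g, i*q+x)) * a$$(k,l) * U$$(l*q+g, i*q+y))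
      = (\<Sum>k<q. \<Sum>l<q. \<Sum>i<q. \<Sum>g<q. cnj (U$$(k*q+g, i*q+x)) * a$$(k,l) * U$$(l*q+g, i*q+y))"
    by (subst sum.swap, rule sum.cong[OF refl], rule sum.swap)
  finally show ?thesis using x y by (simp add: kernel_map_def Mplus_kernel_def sum_distrib_left mult_ac)
qed

lemma index_Mminus:
  assumes U: "U \<in> carrier_mat (q*q) (q*q)" and x: "x < q" and y: "y < q"
  shows "Mminus q U a $$ (x,y) = kernel_map q (Mminus_kernel q U) a $$ (x,y)"
proof -
  let ?T = "tens q (1\<^sub>m q) a"
  have sandwich: "(adj U * ?T * U) $$ (x*q+i, y*q+i) =
     (\<Sum>k<q. \<Sum>l<q. \<Sum>g<q. cnj (U$$(g*q+k, x*q+i)) * a$$(k,l) * U$$(g*q+l, y*q+i))" if i: "i < q" for i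
  proof -
    have r: "x*q+i < q*q" "y*q+i < q*q" using pair_index_less i x y by auto
    have "(adj U * ?T * U) $$ (x*q+i, y*q+i)
      = (\<Sum>w<q*q. (\<Sum>u<q*q. cnj (U$$(u,x*q+i)) * ?T$$(u,w)) * U$$(w,y*q+i))"
      using U r by simp
    also have "\<dots> = (\<Sum>g'<q. \<Sum>l<q. (\<Sum>g<q. \<Sum>k<q. cnj (U$$(g*q+k,x*q+i)) * ((if g = g' then 1 else 0) * a$$(k,l))) * U$$(g'*q+l,y*q+i))"
      by (simp add: sum_pair_index index_tens_pair)
    also have "\<dots> = (\<Sum>g'<q. \<Sum>l<q. \<Sum>k<q. cnj (U$$(g'*q+k,x*q+i)) * a$$(k,l) * U$$(g'*q+l,y*q+i))"
    proof (intro sum.cong refl)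
      fix g' l assume g': "g' \<in> {..<q}"
      have "(\<Sum>g<q. \<Sum>k<q. cnj (U$$(g*q+k,x*q+i)) * ((if g = g' then 1 else 0) * a$$(k,l)))
        = (\<Sum>k<q. \<Sum>g<q. cnj (U$$(g*q+k,x*q+i)) * ((if g = g' then 1 else 0) * a$$(k,l)))"
        by (rule sum.swap)
      also have "\<dots> = (\<Sum>k<q. cnj (U$$(g'*q+k,x*q+i)) * a$$(k,l))"
        using g' by (simp add: if_distrib[of "\<lambda>t. _ * t"] if_distrib[of "\<lambda>t. t * _"] sum.delta' cong: if_cong)
      finally show "(\<Sum>g<q. \<Sum>k<q. cnj (U$$(g*q+k,x*q+i)) * ((if g = g' then 1 else 0) * a$$(k,l))) * U$$(g'*q+l,y*q+i)
        = (\<Sum>k<q. cnj (U$$(g'*q+k,x*q+i)) * a$$(k,l) * U$$(g'*q+l,y*q+i))"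
        by (simp add: sum_distrib_right)
    qed
    also have "\<dots> = (\<Sum>k<q. \<Sum>l<q. \<Sum>g'<q. cnj (U$$(g'*q+k,x*q+i)) * a$$(k,l) * U$$(g'*q+l,y*q+i))"
      by (subst sum.cong[OF refl sum.swap], subst sum.swap, rule sum.cong[OF refl], rule sum.swap)
    finally show ?thesis .
  qed
  have "Mminus q U a $$ (x,y) = (1 / of_nat q) *
      (\<Sum>i<q. \<Sum>k<q. \<Sum>l<q. \<Sum>g<q. cnj (U$$(g*q+k, x*q+i)) * a$$(k,l) * U$$(g*q+l, y*q+i))"
    using x y sandwich by (simp add: Mminus_def ptrace2_def)
  also have "(\<Sum>i<q. \<Sum>k<q. \<Sum>l<q. \<Sum>g<q. cnj (U$$(g*q+k, x*q+i)) * a$$(k,l) * U$$(g*q+l, y*q+i))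
      = (\<Sum>k<q. \<Sum>l<q. \<Sum>i<q. \<Sum>g<q. cnj (U$$(g*q+k, x*q+i)) * a$$(k,l) * U$$(g*q+l, y*q+i))"
    by (subst sum.swap, rule sum.cong[OF refl], rule sum.swap)
  finally show ?thesis using x y by (simp add: kernel_map_def Mminus_kernel_def sum_distrib_left mult_ac)
qed

lemma Mplus_eq_kernel_map:
  assumes "U \<in> carrier_mat (q*q) (q*q)"
  shows "Mplus q U a = kernel_map q (Mplus_kernel q U) a"
  by (rule eq_matI) (use index_Mplus[OF assms] in \<open>auto simp: Mplus_def ptrace1_def kernel_map_def\<close>)

lemma Mminus_eq_kernel_map:
  assumes "U \<in> carrier_mat (q*q) (q*q)"
  shows "Mminus q U a = kernel_map q (Mminus_kernel q U) a"
  by (rule eq_matI) (use index_Mminus[OF assms] in \<open>auto simp: Mminus_def ptrace2_def kernel_map_def\<close>)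

lemma unital_Mplus_kernel:
  assumes U: "unitary_mat (q*q) U" and q0: "0 < q"
  shows "unital_kernel q (Mplus_kernel q U)"
  unfolding unital_kernel_def
proof (intro allI impI)
  fix x y assume x: "x < q" and y: "y < q"
  have "(\<Sum>k<q. Mplus_kernel q U k k x y)
      = 1 / of_nat q * (\<Sum>k<q. \<Sum>i<q. \<Sum>g<q. cnj (U$$(k*q+g, i*q+x)) * U$$(k*q+g, i*q+y))"
    by (simp add: Mplus_kernel_def sum_distrib_left)
  also have "(\<Sum>k<q. \<Sum>i<q. \<Sum>g<q. cnj (U$$(k*q+g, i*q+x)) * U$$(k*q+g, i*q+y))
      = (\<Sum>i<q. \<Sum>k<q. \<Sum>g<q. cnj (U$$(k*q+g, i*q+x)) * U$$(k*q+g, i*q+y))"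
    by (rule sum.swap)
  also have "\<dots> = (\<Sum>i<q. if x = y then 1 else 0)"
  proof (rule sum.cong[OF refl])
    fix i assume "i \<in> {..<q}"
    then have "i*q+x < q*q" "i*q+y < q*q" using pair_index_less x y by auto
    then show "(\<Sum>k<q. \<Sum>g<q. cnj (U$$(k*q+g, i*q+x)) * U$$(k*q+g, i*q+y)) = (if x = y then 1 else 0)"
      using unitary_column_orthonormal[OF U] by (simp add: sum_pair_index)
  qed
  finally show "(\<Sum>k<q. Mplus_kernel q U k k x y) = (if x = y then 1 else 0)" using q0 by simp
qed

lemma trace_preserving_Mplus_kernel:
  assumes U: "unitary_mat (q*q) U" and q0: "0 < q"
  shows "trace_preserving_kernel q (Mplus_kernel q U)"
  unfolding trace_preserving_kernel_def
proof (intro allI impI)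
  fix k l assume k: "k < q" and l: "l < q"
  have "(\<Sum>x<q. Mplus_kernel q U k l x x)
      = 1 / of_nat q * (\<Sum>x<q. \<Sum>i<q. \<Sum>g<q. cnj (U$$(k*q+g, i*q+x)) * U$$(l*q+g, i*q+x))"
    by (simp add: Mplus_kernel_def sum_distrib_left)
  also have "(\<Sum>x<q. \<Sum>i<q. \<Sum>g<q. cnj (U$$(k*q+g, i*q+x)) * U$$(l*q+g, i*q+x))
      = (\<Sum>g<q. \<Sum>i<q. \<Sum>x<q. cnj (U$$(k*q+g, i*q+x)) * U$$(l*q+g, i*q+x))"
    by (subst sum.cong[OF refl sum.swap], subst sum.swap, rule sum.cong[OF refl], rule sum.swap)
  also have "\<dots> = (\<Sum>g<q. if k = l then 1 else 0)"
  proof (rule sum.cong[OF refl])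
    fix g assume "g \<in> {..<q}"
    then have "l*q+g < q*q" "k*q+g < q*q" using pair_index_less k l by auto
    then show "(\<Sum>i<q. \<Sum>x<q. cnj (U$$(k*q+g, i*q+x)) * U$$(l*q+g, i*q+x)) = (if k = l then 1 else 0)"
      using unitary_row_orthonormal[OF U] by (auto simp: sum_pair_index mult.commute)
  qed
  finally show "(\<Sum>x<q. Mplus_kernel q U k l x x) = (if k = l then 1 else 0)" using q0 by simp
qed

lemma unital_Mminus_kernel:
  assumes U: "unitary_mat (q*q) U" and q0: "0 < q"
  shows "unital_kernel q (Mminus_kernel q U)"
  unfolding unital_kernel_def
proof (intro allI impI)
  fix x y assume x: "x < q" and y: "y < q"
  have "(\<Sum>k<q. Mminus_kernel q U k k x y)
      = 1 / of_nat q * (\<Sum>k<q. \<Sum>i<q. \<Sum>g<q. cnj (U$$(g*q+k, x*q+i)) * U$$(g*q+k, y*q+i))"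
    by (simp add: Mminus_kernel_def sum_distrib_left)
  also have "(\<Sum>k<q. \<Sum>i<q. \<Sum>g<q. cnj (U$$(g*q+k, x*q+i)) * U$$(g*q+k, y*q+i))
      = (\<Sum>i<q. \<Sum>g<q. \<Sum>k<q. cnj (U$$(g*q+k, x*q+i)) * U$$(g*q+k, y*q+i))"
    by (subst sum.swap, rule sum.cong[OF refl], rule sum.swap)
  also have "\<dots> = (\<Sum>i<q. if x = y then 1 else 0)"
  proof (rule sum.cong[OF refl])
    fix i assume "i \<in> {..<q}"
    then have "x*q+i < q*q" "y*q+i < q*q" using pair_index_less x y by auto
    then show "(\<Sum>g<q. \<Sum>k<q. cnj (U$$(g*q+k, x*q+i)) * U$$(g*q+k, y*q+i)) = (if x = y then 1 else 0)"
      using unitary_column_orthonormal[OF U] by (auto simp: sum_pair_index)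
  qed
  finally show "(\<Sum>k<q. Mminus_kernel q U k k x y) = (if x = y then 1 else 0)" using q0 by simp
qed

lemma trace_preserving_Mminus_kernel:
  assumes U: "unitary_mat (q*q) U" and q0: "0 < q"
  shows "trace_preserving_kernel q (Mminus_kernel q U)"
  unfolding trace_preserving_kernel_def
proof (intro allI impI)
  fix k l assume k: "k < q" and l: "l < q"
  have "(\<Sum>x<q. Mminus_kernel q U k l x x)
      = 1 / of_nat q * (\<Sum>x<q. \<Sum>i<q. \<Sum>g<q. cnj (U$$(g*q+k, x*q+i)) * U$$(g*q+l, x*q+i))"
    by (simp add: Mminus_kernel_def sum_distrib_left)
  also have "(\<Sum>x<q. \<Sum>i<q. \<Sum>g<q. cnj (U$$(g*q+k, x*q+i)) * U$$(g*q+l, x*q+i))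
      = (\<Sum>g<q. \<Sum>x<q. \<Sum>i<q. cnj (U$$(g*q+k, x*q+i)) * U$$(g*q+l, x*q+i))"
    by (subst sum.cong[OF refl sum.swap], rule sum.swap)
  also have "\<dots> = (\<Sum>g<q. if k = l then 1 else 0)"
  proof (rule sum.cong[OF refl])
    fix g assume "g \<in> {..<q}"
    then have "g*q+l < q*q" "g*q+k < q*q" using pair_index_less k l by auto
    then show "(\<Sum>x<q. \<Sum>i<q. cnj (U$$(g*q+k, x*q+i)) * U$$(g*q+l, x*q+i)) = (if k = l then 1 else 0)"
      using unitary_row_orthonormal[OF U] by (auto simp: sum_pair_index mult.commute)
  qed
  finally show "(\<Sum>x<q. Mminus_kernel q U k l x x) = (if k = l then 1 else 0)" using q0 by simp
qed

section \<open>Realignment and the entangling power\<close>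

lemma realign_carrier [simp]: "realign q X \<in> carrier_mat (q*q) (q*q)"
  by (simp add: realign_def)

lemma realign_dims [simp]: "dim_row (realign q X) = q*q" "dim_col (realign q X) = q*q"
  by (simp_all add: realign_def)

definition swap_index :: "nat \<Rightarrow> nat \<Rightarrow> nat" where
  "swap_index q c = (c mod q)*q + c div q"

lemma swap_index_less: "c < q*q \<Longrightarrow> swap_index q c < q*q"
  unfolding swap_index_def
  by (intro pair_index_less mod_less_of_less_square div_less_of_less_square)

lemma swap_index_swap_index [simp]: "c < q*q \<Longrightarrow> swap_index q (swap_index q c) = c"
  using div_less_of_less_square[of c q] mod_less_of_less_square[of c q] by (simp add: swap_index_def)

lemma swap_op_carrier [simp]: "swap_op q \<in> carrier_mat (q*q) (q*q)"
  by (simp add: swap_op_def)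

lemma swap_op_dims [simp]: "dim_row (swap_op q) = q*q" "dim_col (swap_op q) = q*q"
  by (simp_all add: swap_op_def)

lemma index_swap_op: "r < q*q \<Longrightarrow> c < q*q \<Longrightarrow> swap_op q $$ (r,c) = (if r = swap_index q c then 1 else 0)"
  by (simp add: swap_op_def swap_index_def)

lemma index_mult_swap_op:
  assumes X: "dim_col X = q*q" and r: "r < dim_row X" and c: "c < q*q"
  shows "(X * swap_op q) $$ (r,c) = X $$ (r, swap_index q c)"
proof -
  have "(X * swap_op q) $$ (r,c) = (\<Sum>s<q*q. X$$(r,s) * (if s = swap_index q c then 1 else 0))"
    using X r c by (simp add: index_swap_op)
  then show ?thesis
    using swap_index_less[OF c] by (simp add: if_distrib[of "\<lambda>t. _ * t"] sum.delta cong: if_cong)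
qed

lemma index_swap_op_mult:
  assumes X: "dim_row X = q*q" and r: "r < q*q" and c: "c < dim_col X"
  shows "(swap_op q * X) $$ (r,c) = X $$ (swap_index q r, c)"
proof -
  have "(swap_op q * X) $$ (r,c) = (\<Sum>s<q*q. (if s = swap_index q r then X $$ (s,c) else 0))"
  proof -
    have "(swap_op q * X) $$ (r,c) = (\<Sum>s<q*q. swap_op q $$ (r,s) * X $$ (s,c))" using X r c by simp
    also have "\<dots> = (\<Sum>s<q*q. (if s = swap_index q r then X $$ (s,c) else 0))"
    proof (rule sum.cong[OF refl])
      fix s assume "s \<in> {..<q*q}"
      then have "(r = swap_index q s) = (s = swap_index q r)" using r by auto
      then show "swap_op q $$ (r,s) * X $$ (s,c) = (if s = swap_index q r then X $$ (s,c) else 0)"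
        using \<open>s \<in> {..<q*q}\<close> r by (simp add: index_swap_op)
    qed
    finally show ?thesis .
  qed
  then show ?thesis using swap_index_less[OF r] by (simp add: sum.delta)
qed

lemma adj_swap_op: "adj (swap_op q) = swap_op q"
proof (rule eq_matI)
  fix r c assume "r < dim_row (swap_op q)" "c < dim_col (swap_op q)"
  then have r: "r < q*q" and c: "c < q*q" by auto
  have "(c = swap_index q r) = (r = swap_index q c)" using r c by auto
  then show "adj (swap_op q) $$ (r,c) = swap_op q $$ (r,c)" using r c by (simp add: index_swap_op)
qed auto

lemma swap_op_mult_swap_op: "swap_op q * swap_op q = 1\<^sub>m (q*q)"
proof (rule eq_matI)
  fix r c assume "r < dim_row (1\<^sub>m (q*q))" "c < dim_col (1\<^sub>m (q*q))"
  then have r: "r < q*q" and c: "c < q*q" by auto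
  have "(swap_op q * swap_op q) $$ (r,c) = swap_op q $$ (r, swap_index q c)"
    using index_mult_swap_op[of "swap_op q" q r c] r c by simp
  also have "\<dots> = (if r = c then 1 else 0)"
    using r c swap_index_less[OF c] by (simp add: index_swap_op)
  finally show "(swap_op q * swap_op q) $$ (r,c) = 1\<^sub>m (q*q) $$ (r,c)" using r c by simp
qed auto

lemma unitary_swap_op: "unitary_mat (q*q) (swap_op q)"
  by (simp add: unitary_mat_def adj_swap_op swap_op_mult_swap_op)

lemma realign_swap_op: "realign q (swap_op q) = swap_op q"
proof (rule eq_matI)
  fix r c assume "r < dim_row (swap_op q)" "c < dim_col (swap_op q)"
  then have r: "r < q*q" and c: "c < q*q" by auto
  have rq: "r div q < q" "r mod q < q" "c div q < q" "c mod q < q"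
    using r c div_less_of_less_square mod_less_of_less_square by auto
  have "realign q (swap_op q) $$ (r,c) = (if (c mod q)*q + r mod q = (r div q)*q + c div q then 1 else 0)"
    using r c rq pair_index_less by (simp add: realign_def index_swap_op swap_index_def)
  also have "((c mod q)*q + r mod q = (r div q)*q + c div q) = (r = swap_index q c)"
    unfolding swap_index_def by (metis pair_index_divmod rq div_mult_mod_eq)
  finally show "realign q (swap_op q) $$ (r,c) = swap_op q $$ (r,c)" using r c by (simp add: index_swap_op)
qed auto

lemma realign_mult_swap_op:
  assumes U: "U \<in> carrier_mat (q*q) (q*q)" and a: "a < q" and b: "b < q" and c: "c < q" and d: "d < q"
  shows "realign q (U * swap_op q) $$ (a*q+b, c*q+d) = U$$(d*q+b, a*q+c)"
  using U a b c d pair_index_less index_mult_swap_op[of U q "d*q+b" "c*q+a"]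
  by (simp add: realign_def swap_index_def)

text \<open>Since \<open>X\<^sup>R X\<^sup>R\<^sup>\<dagger>\<close> is Hermitian, this is \<open>tr[(X\<^sup>R X\<^sup>R\<^sup>\<dagger>)\<^sup>2]\<close>.\<close>

definition realign_gram_norm :: "nat \<Rightarrow> complex mat \<Rightarrow> real" where
  "realign_gram_norm q X = frobenius_sq (realign q X * adj (realign q X))"

lemma Ent_eq_realign_gram_norm: "Ent q X = 1 - realign_gram_norm q X / real q ^ 4"
proof -
  let ?R = "realign q X"
  have "adj (?R * adj ?R) = ?R * adj ?R" using adj_mult[OF realign_carrier adj_carrier[OF realign_carrier]] by simp
  then have "realign_gram_norm q X = Re (mtrace ((?R * adj ?R) * (?R * adj ?R)))"
    unfolding realign_gram_norm_def
    using frobenius_sq_eq_trace[OF mult_carrier_mat[OF realign_carrier adj_carrier[OF realign_carrier]]] by simp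
  then show ?thesis by (simp add: Ent_def)
qed

lemma realign_gram_norm_unitary:
  assumes "unitary_mat (q*q) (realign q X)"
  shows "realign_gram_norm q X = (real q)^2"
  using assms by (simp add: realign_gram_norm_def unitary_mat_def power2_eq_square)

lemma realign_gram_norm_mult_swap_Mplus:
  assumes U: "U \<in> carrier_mat (q*q) (q*q)"
  shows "realign_gram_norm q (U * swap_op q) = (real q)^2 * frobenius_sq (kernel_mat q (Mplus_kernel q U))"
proof -
  let ?R = "realign q (U * swap_op q)"
  have entry: "(adj ?R * ?R) $$ (j*q+i, j'*q+i') = of_nat q * Mplus_kernel q U i i' j j'"
    if "j < q" "i < q" "j' < q" "i' < q" for j i j' i'
  proof -
    have "(adj ?R * ?R) $$ (j*q+i, j'*q+i') = (\<Sum>b<q. \<Sum>a<q. cnj (U$$(i*q+a, b*q+j)) * U$$(i'*q+a, b*q+j'))"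
      using that pair_index_less by (simp add: sum_pair_index realign_mult_swap_op[OF U])
    then show ?thesis using that by (simp add: Mplus_kernel_def)
  qed
  have "realign_gram_norm q (U * swap_op q) = frobenius_sq (adj ?R * ?R)"
    unfolding realign_gram_norm_def by (rule frobenius_sq_gram_comm[OF realign_carrier])
  also have "\<dots> = (\<Sum>j<q. \<Sum>i<q. \<Sum>j'<q. \<Sum>i'<q. (real q)^2 * (cmod (Mplus_kernel q U i i' j j'))^2)"
    by (simp add: frobenius_sq_def sum_pair_index entry norm_mult power_mult_distrib del: index_mult_mat_sum)
  also have "\<dots> = (real q)^2 * (\<Sum>j<q. \<Sum>j'<q. \<Sum>i<q. \<Sum>i'<q. (cmod (Mplus_kernel q U i i' j j'))^2)"
    by (simp add: sum_distrib_left) (rule sum.cong[OF refl], rule sum.swap)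
  also have "\<dots> = (real q)^2 * frobenius_sq (kernel_mat q (Mplus_kernel q U))"
    by (simp add: frobenius_sq_kernel_mat)
  finally show ?thesis .
qed

lemma realign_gram_norm_mult_swap_Mminus:
  assumes U: "U \<in> carrier_mat (q*q) (q*q)"
  shows "realign_gram_norm q (U * swap_op q) = (real q)^2 * frobenius_sq (kernel_mat q (Mminus_kernel q U))"
proof -
  let ?R = "realign q (U * swap_op q)"
  let ?f = "\<lambda>a b c d. (cmod (Mminus_kernel q U d b c a))^2"
  have entry: "(?R * adj ?R) $$ (a*q+b, c*q+d) = of_nat q * Mminus_kernel q U d b c a"
    if "a < q" "b < q" "c < q" "d < q" for a b c d
  proof -
    have r: "a*q+b < q*q" "c*q+d < q*q" using that pair_index_less by auto
    have "(?R * adj ?R) $$ (a*q+b, c*q+d) = (\<Sum>u<q*q. ?R $$ (a*q+b, u) * cnj (?R $$ (c*q+d, u)))"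
      using r by simp
    also have "\<dots> = (\<Sum>j<q. \<Sum>i<q. cnj (U$$(i*q+d, c*q+j)) * U$$(i*q+b, a*q+j))"
      using that by (simp add: sum_pair_index realign_mult_swap_op[OF U] mult.commute)
    finally show ?thesis using that by (simp add: Mminus_kernel_def)
  qed
  have "realign_gram_norm q (U * swap_op q) = (\<Sum>a<q. \<Sum>b<q. \<Sum>c<q. \<Sum>d<q. (cmod ((?R * adj ?R) $$ (a*q+b, c*q+d)))^2)"
    by (simp add: realign_gram_norm_def frobenius_sq_def sum_pair_index del: index_mult_mat_sum)
  also have "\<dots> = (\<Sum>a<q. \<Sum>b<q. \<Sum>c<q. \<Sum>d<q. (real q)^2 * ?f a b c d)"
    by (intro sum.cong refl) (simp add: entry norm_mult power_mult_distrib)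
  also have "\<dots> = (real q)^2 * (\<Sum>a<q. \<Sum>b<q. \<Sum>c<q. \<Sum>d<q. ?f a b c d)"
    by (simp add: sum_distrib_left)
  also have "(\<Sum>a<q. \<Sum>b<q. \<Sum>c<q. \<Sum>d<q. ?f a b c d) = (\<Sum>a<q. \<Sum>c<q. \<Sum>b<q. \<Sum>d<q. ?f a b c d)"
    by (rule sum.cong[OF refl], rule sum.swap)
  also have "\<dots> = (\<Sum>a<q. \<Sum>c<q. \<Sum>d<q. \<Sum>b<q. ?f a b c d)"
    by (rule sum.cong[OF refl], rule sum.cong[OF refl], rule sum.swap)
  also have "\<dots> = (\<Sum>c<q. \<Sum>a<q. \<Sum>d<q. \<Sum>b<q. ?f a b c d)"
    by (rule sum.swap)
  also have "\<dots> = frobenius_sq (kernel_mat q (Mminus_kernel q U))"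
    by (simp add: frobenius_sq_kernel_mat)
  finally show ?thesis .
qed

text \<open>For dual-unitary \<open>U\<close> both \<open>E(U)\<close> and \<open>E(S)\<close> equal \<open>1 - 1/q\<^sup>2\<close>, so \<open>e\<^sub>p(U)\<close> is an
  affine function of \<open>tr[((US)\<^sup>R (US)\<^sup>R\<^sup>\<dagger>)\<^sup>2]\<close>.\<close>

lemma ep_eq_realign_gram_norm:
  assumes q2: "q \<ge> 2" and RU: "unitary_mat (q*q) (realign q U)"
  shows "real (q*q-1) * (1 - ep q U) = realign_gram_norm q (U * swap_op q) / (real q)^2 - 1"
proof -
  define T where "T = realign_gram_norm q (U * swap_op q)"
  define p where "p = (real q)^2"
  have "real q * real q \<ge> 2 * 2" using q2 by (intro mult_mono) auto
  then have p1: "p > 1" unfolding p_def by (simp add: power2_eq_square)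
  have p4: "real q ^ 4 = p^2" by (simp add: p_def power_mult[symmetric])
  have "q*q \<ge> 1" using q2 by (simp add: Suc_le_eq)
  then have rq: "real (q*q-1) = p - 1" unfolding p_def by (simp add: of_nat_diff power2_eq_square)
  have "realign_gram_norm q (swap_op q) = p"
    using realign_gram_norm_unitary[of q "swap_op q"] unitary_swap_op realign_swap_op by (simp add: p_def)
  then have ES: "Ent q (swap_op q) = 1 - p / p^2"
    by (simp only: Ent_eq_realign_gram_norm p4)
  have "realign_gram_norm q U = p"
    using realign_gram_norm_unitary[OF RU] by (simp add: p_def)
  then have EU: "Ent q U = 1 - p / p^2"
    by (simp only: Ent_eq_realign_gram_norm p4)
  have EUS: "Ent q (U * swap_op q) = 1 - T / p^2"
    by (simp only: Ent_eq_realign_gram_norm T_def p4)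
  have p0: "p \<noteq> 0" and "p - 1 \<noteq> 0" using p1 by auto
  have e: "1 - p / p^2 = (p - 1) / p" using p0 by (simp add: power2_eq_square diff_divide_distrib)
  have "real (q*q-1) * (1 - ep q U) = (p - 1) * (1 - (1 - T / p^2) / ((p - 1) / p))"
    unfolding rq ep_def ES EU EUS e by simp
  also have "\<dots> = (p - 1) - (1 - T / p^2) * p"
    using \<open>p - 1 \<noteq> 0\<close> by (simp add: right_diff_distrib)
  also have "(1 - T / p^2) * p = p - T / p" using p0 by (simp add: power2_eq_square left_diff_distrib)
  finally show ?thesis by (simp add: T_def p_def)
qed

section \<open>Invariance under local unitaries\<close>

lemma tens_mult:
  assumes A: "A \<in> carrier_mat q q" and B: "B \<in> carrier_mat q q" and C: "C \<in> carrier_mat q q" and D: "D \<in> carrier_mat q q"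
  shows "tens q A B * tens q C D = tens q (A*C) (B*D)"
proof (rule eq_matI)
  fix r c assume "r < dim_row (tens q (A*C) (B*D))" "c < dim_col (tens q (A*C) (B*D))"
  then have r: "r < q*q" and c: "c < q*q" by auto
  have rq: "r div q < q" "r mod q < q" "c div q < q" "c mod q < q"
    using r c div_less_of_less_square mod_less_of_less_square by auto
  have "(tens q A B * tens q C D) $$ (r,c)
      = (\<Sum>a<q. \<Sum>b<q. (A$$(r div q, a) * C$$(a, c div q)) * (B$$(r mod q, b) * D$$(b, c mod q)))"
    using r c pair_index_less by (simp add: sum_pair_index index_tens mult_ac)
  also have "\<dots> = (\<Sum>a<q. A$$(r div q, a) * C$$(a, c div q)) * (\<Sum>b<q. B$$(r mod q, b) * D$$(b, c mod q))"
    by (simp add: sum_product)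
  also have "\<dots> = tens q (A*C) (B*D) $$ (r,c)"
    using r c rq A B C D by (simp add: index_tens)
  finally show "(tens q A B * tens q C D) $$ (r,c) = tens q (A*C) (B*D) $$ (r,c)" .
qed auto

lemma adj_tens:
  assumes A: "A \<in> carrier_mat q q" and B: "B \<in> carrier_mat q q"
  shows "adj (tens q A B) = tens q (adj A) (adj B)"
proof (rule eq_matI)
  fix r c assume "r < dim_row (tens q (adj A) (adj B))" "c < dim_col (tens q (adj A) (adj B))"
  then have r: "r < q*q" and c: "c < q*q" by auto
  have "r div q < q" "r mod q < q" "c div q < q" "c mod q < q"
    using r c div_less_of_less_square mod_less_of_less_square by auto
  then show "adj (tens q A B) $$ (r,c) = tens q (adj A) (adj B) $$ (r,c)"
    using r c A B by (simp add: index_tens)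
qed auto

lemma tens_one: "tens q (1\<^sub>m q) (1\<^sub>m q) = 1\<^sub>m (q*q)"
proof (rule eq_matI)
  fix r c assume "r < dim_row (1\<^sub>m (q*q))" "c < dim_col (1\<^sub>m (q*q))"
  then have r: "r < q*q" and c: "c < q*q" by auto
  have "r div q < q" "r mod q < q" "c div q < q" "c mod q < q"
    using r c div_less_of_less_square mod_less_of_less_square by auto
  moreover have "(r div q = c div q \<and> r mod q = c mod q) = (r = c)" by (metis div_mult_mod_eq)
  ultimately show "tens q (1\<^sub>m q) (1\<^sub>m q) $$ (r,c) = 1\<^sub>m (q*q) $$ (r,c)"
    using r c by (auto simp: index_tens)
qed auto

lemma unitary_mat_tens:
  assumes A: "unitary_mat q A" and B: "unitary_mat q B"
  shows "unitary_mat (q*q) (tens q A B)"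
proof -
  have Ac: "A \<in> carrier_mat q q" and Bc: "B \<in> carrier_mat q q" using A B by (auto simp: unitary_mat_def)
  show ?thesis
    unfolding unitary_mat_def adj_tens[OF Ac Bc]
    using tens_mult[OF Ac Bc adj_carrier[OF Ac] adj_carrier[OF Bc]]
      tens_mult[OF adj_carrier[OF Ac] adj_carrier[OF Bc] Ac Bc] A B tens_one
    by (simp add: unitary_mat_def)
qed

lemma realign_tens_mult_tens:
  assumes A: "A \<in> carrier_mat q q" and B: "B \<in> carrier_mat q q" and C: "C \<in> carrier_mat q q"
    and D: "D \<in> carrier_mat q q" and X: "X \<in> carrier_mat (q*q) (q*q)"
  shows "realign q (tens q A B * X * tens q C D)
    = tens q (transpose_mat D) B * realign q X * tens q C (transpose_mat A)"
proof (rule eq_matI)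
  fix r c assume "r < dim_row (tens q (transpose_mat D) B * realign q X * tens q C (transpose_mat A))"
    "c < dim_col (tens q (transpose_mat D) B * realign q X * tens q C (transpose_mat A))"
  then have r: "r < q*q" and c: "c < q*q" by auto
  define be al j i where "be = r div q" and "al = r mod q" and "j = c div q" and "i = c mod q"
  have idx: "be < q" "al < q" "j < q" "i < q"
    using r c div_less_of_less_square mod_less_of_less_square by (auto simp: be_def al_def j_def i_def)
  have rc: "r = be*q+al" "c = j*q+i" by (simp_all add: be_def al_def j_def i_def)
  let ?F = "\<lambda>c1 a1 d1 b1. A$$(i,a1) * B$$(al,b1) * X$$(a1*q+b1, c1*q+d1) * C$$(c1,j) * D$$(d1,be)"
  have "realign q (tens q A B * X * tens q C D) $$ (r,c) = (tens q A B * X * tens q C D) $$ (i*q+al, j*q+be)"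
    using r c by (simp add: realign_def i_def al_def j_def be_def)
  also have "\<dots> = (\<Sum>c1<q. \<Sum>d1<q. (\<Sum>a1<q. \<Sum>b1<q. A$$(i,a1) * B$$(al,b1) * X$$(a1*q+b1, c1*q+d1)) * (C$$(c1,j) * D$$(d1,be)))"
    using idx X pair_index_less by (simp add: sum_pair_index index_tens_pair)
  also have "\<dots> = (\<Sum>c1<q. \<Sum>d1<q. \<Sum>a1<q. \<Sum>b1<q. ?F c1 a1 d1 b1)"
    by (simp add: sum_distrib_left sum_distrib_right mult_ac)
  also have "\<dots> = (\<Sum>c1<q. \<Sum>a1<q. \<Sum>d1<q. \<Sum>b1<q. ?F c1 a1 d1 b1)"
    by (rule sum.cong[OF refl], rule sum.swap)
  also have "\<dots> = (\<Sum>c1<q. \<Sum>a1<q. (\<Sum>d1<q. \<Sum>b1<q. D$$(d1,be) * B$$(al,b1) * X$$(a1*q+b1, c1*q+d1)) * (C$$(c1,j) * A$$(i,a1)))"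
    by (simp add: sum_distrib_left sum_distrib_right mult_ac)
  also have "\<dots> = (tens q (transpose_mat D) B * realign q X * tens q C (transpose_mat A)) $$ (be*q+al, j*q+i)"
    using idx X A D pair_index_less by (simp add: sum_pair_index index_tens_pair realign_def)
  finally show "realign q (tens q A B * X * tens q C D) $$ (r,c)
      = (tens q (transpose_mat D) B * realign q X * tens q C (transpose_mat A)) $$ (r,c)"
    using rc by simp
qed auto

lemma tens_mult_swap_op: "tens q A B * swap_op q = swap_op q * tens q B A"
proof (rule eq_matI)
  fix r c assume "r < dim_row (swap_op q * tens q B A)" "c < dim_col (swap_op q * tens q B A)"
  then have r: "r < q*q" and c: "c < q*q" by auto
  have rq: "r div q < q" "r mod q < q" "c div q < q" "c mod q < q"
    using r c div_less_of_less_square mod_less_of_less_square by auto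
  have "(tens q A B * swap_op q) $$ (r,c) = tens q A B $$ (r, swap_index q c)"
    by (rule index_mult_swap_op) (use r c in auto)
  also have "\<dots> = A $$ (r div q, c mod q) * B $$ (r mod q, c div q)"
    using r swap_index_less[OF c] rq by (simp add: index_tens swap_index_def)
  also have "\<dots> = tens q B A $$ (swap_index q r, c)"
    using c swap_index_less[OF r] rq by (simp add: index_tens swap_index_def)
  also have "\<dots> = (swap_op q * tens q B A) $$ (r,c)"
    by (rule index_swap_op_mult[symmetric]) (use r c in auto)
  finally show "(tens q A B * swap_op q) $$ (r,c) = (swap_op q * tens q B A) $$ (r,c)" .
qed auto

lemma dual_unitary_local:
  assumes du: "dual_unitary q U"
    and u1: "unitary_mat q u1" and u2: "unitary_mat q u2" and v1: "unitary_mat q v1" and v2: "unitary_mat q v2"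
  shows "dual_unitary q (tens q u1 u2 * U * tens q v1 v2)"
proof -
  have U: "unitary_mat (q*q) U" and RU: "unitary_mat (q*q) (realign q U)"
    using du by (auto simp: dual_unitary_def)
  have c: "u1 \<in> carrier_mat q q" "u2 \<in> carrier_mat q q" "v1 \<in> carrier_mat q q" "v2 \<in> carrier_mat q q"
    using u1 u2 v1 v2 by (auto simp: unitary_mat_def)
  have Uc: "U \<in> carrier_mat (q*q) (q*q)" using U by (simp add: unitary_mat_def)
  have "unitary_mat (q*q) (tens q u1 u2 * U * tens q v1 v2)"
    by (intro unitary_mat_mult unitary_mat_tens U u1 u2 v1 v2)
  moreover have "unitary_mat (q*q) (realign q (tens q u1 u2 * U * tens q v1 v2))"
    unfolding realign_tens_mult_tens[OF c Uc]
    by (intro unitary_mat_mult unitary_mat_tens unitary_mat_transpose RU u1 u2 v1 v2)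
  ultimately show ?thesis by (simp add: dual_unitary_def)
qed

lemma realign_gram_norm_local:
  assumes A: "unitary_mat q A" and B: "unitary_mat q B" and C: "unitary_mat q C" and D: "unitary_mat q D"
    and X: "X \<in> carrier_mat (q*q) (q*q)"
  shows "realign_gram_norm q (tens q A B * X * tens q C D) = realign_gram_norm q X"
proof -
  have c: "A \<in> carrier_mat q q" "B \<in> carrier_mat q q" "C \<in> carrier_mat q q" "D \<in> carrier_mat q q"
    using A B C D by (auto simp: unitary_mat_def)
  show ?thesis
    unfolding realign_gram_norm_def realign_tens_mult_tens[OF c X]
    by (rule frobenius_sq_gram_unitary_mult[OF unitary_mat_tens[OF unitary_mat_transpose[OF D] B]
          unitary_mat_tens[OF C unitary_mat_transpose[OF A]] realign_carrier])
qed

lemma ep_local: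
  assumes U: "U \<in> carrier_mat (q*q) (q*q)"
    and u1: "unitary_mat q u1" and u2: "unitary_mat q u2" and v1: "unitary_mat q v1" and v2: "unitary_mat q v2"
  shows "ep q (tens q u1 u2 * U * tens q v1 v2) = ep q U"
proof -
  have S: "swap_op q \<in> carrier_mat (q*q) (q*q)" by simp
  have P: "tens q u1 u2 * U \<in> carrier_mat (q*q) (q*q)" by (rule mult_carrier_mat[OF tens_carrier U])
  have "tens q u1 u2 * U * tens q v1 v2 * swap_op q = tens q u1 u2 * U * (swap_op q * tens q v2 v1)"
    using assoc_mult_mat[OF P tens_carrier S] by (simp add: tens_mult_swap_op)
  also have "\<dots> = tens q u1 u2 * (U * swap_op q) * tens q v2 v1"
    using assoc_mult_mat[OF P S tens_carrier, symmetric] assoc_mult_mat[OF tens_carrier U S] by simp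
  finally have "realign_gram_norm q (tens q u1 u2 * U * tens q v1 v2 * swap_op q) = realign_gram_norm q (U * swap_op q)"
    using realign_gram_norm_local[OF u1 u2 v2 v1 mult_carrier_mat[OF U S]] by simp
  moreover have "realign_gram_norm q (tens q u1 u2 * U * tens q v1 v2) = realign_gram_norm q U"
    by (rule realign_gram_norm_local[OF u1 u2 v1 v2 U])
  ultimately show ?thesis by (simp add: ep_def Ent_eq_realign_gram_norm)
qed

lemma sum_sq_nontrivial_eigenvalues_le:
  assumes q2: "q \<ge> 2" and du: "dual_unitary q U" and M: "M \<in> {Mplus q U, Mminus q U}"
    and cp: "char_poly (restr_traceless q M) = (\<Prod>a\<leftarrow>lams. [:-a, 1:])"
  shows "(\<Sum>a\<leftarrow>lams. (cmod a)^2) \<le> real (q*q-1) * (1 - ep q U)"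
proof -
  have U: "unitary_mat (q*q) U" and RU: "unitary_mat (q*q) (realign q U)"
    using du by (auto simp: dual_unitary_def)
  have Uc: "U \<in> carrier_mat (q*q) (q*q)" using U by (simp add: unitary_mat_def)
  have q0: "0 < q" using q2 by simp
  obtain K where K: "M = kernel_map q K"
    and unital: "unital_kernel q K" and tp: "trace_preserving_kernel q K"
    and gram: "realign_gram_norm q (U * swap_op q) = (real q)^2 * frobenius_sq (kernel_mat q K)"
  proof (cases "M = Mplus q U")
    case True
    show ?thesis
    proof (rule that)
      show "M = kernel_map q (Mplus_kernel q U)" unfolding True by (intro ext Mplus_eq_kernel_map[OF Uc])
    qed (use unital_Mplus_kernel[OF U q0] trace_preserving_Mplus_kernel[OF U q0]
        realign_gram_norm_mult_swap_Mplus[OF Uc] in auto)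
  next
    case False
    then have Mm: "M = Mminus q U" using M by auto
    show ?thesis
    proof (rule that)
      show "M = kernel_map q (Mminus_kernel q U)" unfolding Mm by (intro ext Mminus_eq_kernel_map[OF Uc])
    qed (use unital_Mminus_kernel[OF U q0] trace_preserving_Mminus_kernel[OF U q0]
        realign_gram_norm_mult_swap_Mminus[OF Uc] in auto)
  qed
  have "char_poly (kernel_mat q K) = (\<Prod>a\<leftarrow>(1 # lams). [:-a, 1:])"
    using char_poly_kernel_mat[OF q0 unital tp] cp K by simp
  then have "(\<Sum>a\<leftarrow>(1 # lams). (cmod a)^2) \<le> frobenius_sq (kernel_mat q K)"
    by (rule sum_sq_eigenvalues_le_frobenius_sq[OF kernel_mat_carrier])
  moreover have "real (q*q-1) * (1 - ep q U) = frobenius_sq (kernel_mat q K) - 1"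
    using ep_eq_realign_gram_norm[OF q2 RU] gram q0 by simp
  ultimately show ?thesis by simp
qed

lemma length_nontrivial_eigenvalues:
  assumes "char_poly (restr_traceless q M) = (\<Prod>a\<leftarrow>lams. [:-a, 1:])"
  shows "length lams = q*q-1"
proof -
  have "degree (char_poly (restr_traceless q M)) = q*q-1"
    using degree_monic_char_poly[OF restr_traceless_carrier] by blast
  then show ?thesis using degree_linear_factors[of uminus lams] assms by simp
qed

lemma sorted_modulus_sq_le:
  assumes sorted: "sorted_wrt (\<lambda>x y. cmod x \<ge> cmod y) lams" and k: "1 \<le> k" "k \<le> length lams"
  shows "real k * (cmod (lams ! (k-1)))^2 \<le> (\<Sum>i<length lams. (cmod (lams ! i))^2)"
proof -
  have "real k * (cmod (lams ! (k-1)))^2 = (\<Sum>i<k. (cmod (lams ! (k-1)))^2)" by simp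
  also have "\<dots> \<le> (\<Sum>i<k. (cmod (lams ! i))^2)"
  proof (rule sum_mono)
    fix i assume "i \<in> {..<k}"
    then have "cmod (lams ! (k-1)) \<le> cmod (lams ! i)"
      using sorted_wrt_nth_less[OF sorted, of i "k-1"] k by (cases "i = k-1") auto
    then show "(cmod (lams ! (k-1)))^2 \<le> (cmod (lams ! i))^2" by (simp add: power_mono)
  qed
  also have "\<dots> \<le> (\<Sum>i<length lams. (cmod (lams ! i))^2)"
    by (rule sum_mono2) (use k in auto)
  finally show ?thesis .
qed

lemma sorted_modulus_bounds:
  assumes sorted: "sorted_wrt (\<lambda>x y. cmod x \<ge> cmod y) lams" and len: "length lams = n"
    and S: "(\<Sum>i<n. (cmod (lams ! i))^2) \<le> real n * (1 - e)"
  shows "\<forall>k\<in>{1..n}. cmod (lams ! (k-1)) \<le> sqrt (1 - e) * sqrt (real n) / sqrt (real k)"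
    and "\<forall>k\<in>{1..n}. e > 1 - real k / real n \<longrightarrow> (\<forall>j\<in>{k..n}. cmod (lams ! (j-1)) < 1)"
proof -
  have kb: "real k * (cmod (lams ! (k-1)))^2 \<le> real n * (1 - e)" if "1 \<le> k" "k \<le> n" for k
    using sorted_modulus_sq_le[OF sorted, of k] that S len by simp
  show "\<forall>k\<in>{1..n}. cmod (lams ! (k-1)) \<le> sqrt (1 - e) * sqrt (real n) / sqrt (real k)"
  proof
    fix k assume "k \<in> {1..n}"
    then have k: "1 \<le> k" "k \<le> n" by auto
    then have "(cmod (lams ! (k-1)))^2 \<le> real n * (1 - e) / real k"
      using kb[OF k] by (simp add: field_simps)
    then have "cmod (lams ! (k-1)) \<le> sqrt (real n * (1 - e) / real k)" by (rule real_le_rsqrt)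
    then show "cmod (lams ! (k-1)) \<le> sqrt (1 - e) * sqrt (real n) / sqrt (real k)"
      by (simp add: real_sqrt_mult real_sqrt_divide mult.commute)
  qed
  show "\<forall>k\<in>{1..n}. e > 1 - real k / real n \<longrightarrow> (\<forall>j\<in>{k..n}. cmod (lams ! (j-1)) < 1)"
  proof (intro ballI impI)
    fix k j assume k: "k \<in> {1..n}" and ek: "e > 1 - real k / real n" and j: "j \<in> {k..n}"
    have "real n * (1 - e) < real k"
      using ek k by (simp add: field_simps)
    then have "real j * (cmod (lams ! (j-1)))^2 < real j * 1"
      using kb[of j] k j by (simp add: order_le_less_trans)
    then have "(cmod (lams ! (j-1)))^2 < 1" using k j by (simp add: mult_less_cancel_left)
    then show "cmod (lams ! (j-1)) < 1" by (simp add: power_less_one_iff abs_square_less_1)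
  qed
qed

lemma nontrivial_eigenvalue_modulus_lt_one:
  assumes q2: "q \<ge> 2" and du: "dual_unitary q U" and M: "M \<in> {Mplus q U, Mminus q U}"
    and ep: "ep q U > real (q*q-2) / real (q*q-1)"
    and z: "eigenvalue (restr_traceless q M) z"
  shows "cmod z < 1"
proof -
  obtain lams where cp: "char_poly (restr_traceless q M) = (\<Prod>a\<leftarrow>lams. [:-a, 1:])"
    using char_poly_factorized[OF restr_traceless_carrier] by blast
  have "poly (\<Prod>a\<leftarrow>lams. [:-a, 1:]) z = 0"
    using z cp eigenvalue_root_char_poly[OF restr_traceless_carrier] by simp
  then have "z \<in> set lams" by (induction lams) auto
  then have "(cmod z)^2 \<le> (\<Sum>a\<leftarrow>lams. (cmod a)^2)"
    by (intro member_le_sum_list) auto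
  also have "\<dots> \<le> real (q*q-1) * (1 - ep q U)"
    by (rule sum_sq_nontrivial_eigenvalues_le[OF q2 du M cp])
  also have "\<dots> < 1"
  proof -
    have "q*q \<ge> 4" using mult_le_mono[OF q2 q2] by simp
    then have "1 \<le> q*q" "2 \<le> q*q" by linarith+
    then have n1: "real (q*q-1) = real (q*q) - 1" and n2: "real (q*q-2) = real (q*q) - 2"
      by (simp_all only: of_nat_diff of_nat_1 of_nat_numeral)
    have "real (q*q) - 1 > 0" using \<open>q*q \<ge> 4\<close> by linarith
    moreover have "(real (q*q) - 2) / (real (q*q) - 1) < ep q U" using ep unfolding n1 n2 .
    ultimately have "real (q*q) - 2 < ep q U * (real (q*q) - 1)" by (simp add: pos_divide_less_eq)
    then show ?thesis unfolding n1 by (simp add: algebra_simps)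
  qed
  finally show ?thesis by (simp add: power_less_one_iff abs_square_less_1)
qed

lemma nontrivial_eigenvalue_bounds:
  assumes q2: "q \<ge> 2" and du: "dual_unitary q U" and M: "M \<in> {Mplus q U, Mminus q U}"
    and lams: "nontriv_eigs_sorted q M lams"
  shows "(\<Sum>i<q*q-1. (cmod (lams ! i))^2) \<le> real (q*q-1) * (1 - ep q U)
      \<and> (\<forall>k\<in>{1..q*q-1}. cmod (lams ! (k-1)) \<le>
            sqrt (1 - ep q U) * sqrt (real (q*q-1)) / sqrt (real k))
      \<and> cmod (lams ! (q*q-2)) \<le> sqrt (1 - ep q U)
      \<and> cmod (lams ! 0) \<le> sqrt (1 - ep q U) * sqrt (real (q*q-1))
      \<and> (\<forall>k\<in>{1..q*q-1}. ep q U > 1 - real k / real (q*q-1) \<longrightarrow>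
            (\<forall>j\<in>{k..q*q-1}. cmod (lams ! (j-1)) < 1))"
proof -
  have cp: "char_poly (restr_traceless q M) = (\<Prod>a\<leftarrow>lams. [:-a, 1:])"
    and sorted: "sorted_wrt (\<lambda>x y. cmod x \<ge> cmod y) lams"
    using lams by (auto simp: nontriv_eigs_sorted_def)
  have len: "length lams = q*q-1" by (rule length_nontrivial_eigenvalues[OF cp])
  have S: "(\<Sum>i<q*q-1. (cmod (lams ! i))^2) \<le> real (q*q-1) * (1 - ep q U)"
    using sum_sq_nontrivial_eigenvalues_le[OF q2 du M cp] len
    by (simp add: sum_list_sum_nth lessThan_atLeast0)
  note bounds = sorted_modulus_bounds[OF sorted len S]
  have n: "1 \<le> q*q-1" "q*q-2 = (q*q-1)-1"
    using mult_le_mono[OF q2 q2] by auto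
  have "cmod (lams ! (q*q-2)) \<le> sqrt (1 - ep q U)"
    using bounds(1)[rule_format, of "q*q-1"] n by simp
  moreover have "cmod (lams ! 0) \<le> sqrt (1 - ep q U) * sqrt (real (q*q-1))"
    using bounds(1)[rule_format, of 1] n by simp
  ultimately show ?thesis using S bounds by blast
qed

lemma mixing_under_local_unitaries:
  assumes q2: "q \<ge> 2" and du: "dual_unitary q U" and ep: "ep q U > real (q*q-2) / real (q*q-1)"
    and u1: "unitary_mat q u1" and u2: "unitary_mat q u2" and v1: "unitary_mat q v1" and v2: "unitary_mat q v2"
    and M: "M \<in> {Mplus q (tens q u1 u2 * U * tens q v1 v2), Mminus q (tens q u1 u2 * U * tens q v1 v2)}"
    and z: "eigenvalue (restr_traceless q M) z"
  shows "cmod z < 1"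
proof -
  have Uc: "U \<in> carrier_mat (q*q) (q*q)" using du by (simp add: dual_unitary_def unitary_mat_def)
  show ?thesis
    using nontrivial_eigenvalue_modulus_lt_one[OF q2 dual_unitary_local[OF du u1 u2 v1 v2] M _ z]
      ep_local[OF Uc u1 u2 v1 v2] ep by simp
qed

theorem mainTheorem3:
  fixes q :: nat and U :: "complex mat"
  assumes q2: "q \<ge> 2"
    and du: "dual_unitary q U"
  shows
    "(\<forall>M \<in> {Mplus q U, Mminus q U}. \<forall>lams. nontriv_eigs_sorted q M lams \<longrightarrow>
        (\<Sum>i<q*q-1. (cmod (lams ! i))^2) \<le> real (q*q-1) * (1 - ep q U)
      \<and> (\<forall>k\<in>{1..q*q-1}. cmod (lams ! (k-1)) \<le>
            sqrt (1 - ep q U) * sqrt (real (q*q-1)) / sqrt (real k))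
      \<and> cmod (lams ! (q*q-2)) \<le> sqrt (1 - ep q U)
      \<and> cmod (lams ! 0) \<le> sqrt (1 - ep q U) * sqrt (real (q*q-1))
      \<and> (\<forall>k\<in>{1..q*q-1}. ep q U > 1 - real k / real (q*q-1) \<longrightarrow>
            (\<forall>j\<in>{k..q*q-1}. cmod (lams ! (j-1)) < 1)))
   \<and> (ep q U > real (q*q-2) / real (q*q-1) \<longrightarrow>
      (\<forall>u1 u2 v1 v2. unitary_mat q u1 \<and> unitary_mat q u2 \<and> unitary_mat q v1 \<and> unitary_mat q v2 \<longrightarrow>
         (let U' = tens q u1 u2 * U * tens q v1 v2 in
          \<forall>M \<in> {Mplus q U', Mminus q U'}. \<forall>z. eigenvalue (restr_traceless q M) z \<longrightarrow> cmod z < 1)))"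
  apply (rule conjI)
  subgoal by (intro ballI allI impI) (rule nontrivial_eigenvalue_bounds[OF q2 du])
  subgoal unfolding Let_def
    by (intro impI allI ballI, elim conjE) (rule mixing_under_local_unitaries[OF q2 du])
  done

end
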